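(* Fix $\lambda$ and $\beta\in(0,1)$. Let $r_\lambda(x_1),\ldots,r_\lambda(x_n)$ be i.i.d. real random variables with CDF $F_\lambda$, with $r_\lambda(x)\in[a,b]$ almost surely for some $-\infty<a<b<\infty$, and with $F_\lambda$ continuous and strictly increasing. Let $\psi(p)=\max\{p-\beta,0\}/(1-\beta)$, so that $R_\psi(\lambda)=\int_0^1F_\lambda^{-1}(p)\,d\psi(p)=\operatorname{CVaR}_\beta$ of $F_\lambda$, and let $\hat R_\psi(\lambda)=\sum_{i=1}^n\{\psi(i/n)-\psi((i-1)/n)\}r_{\lambda,(i)}$, where $r_{\lambda,(1)}\le\cdots\le r_{\lambda,(n)}$ are the order statistics. Define $$\hat\sigma^2(\lambda)=\frac{1}{(1-\beta)^2}\,\widehat{\operatorname{Var}}\Big(\big\{\max\{r_\lambda(x_i),\,r_{\lambda,(\lceil n\beta\rceil)}\}\big\}_{i=1}^n\Big),$$ where $\widehat{\operatorname{Var}}$ denotes the sample variance. Then $\sqrt n(\hat R_\psi(\lambda)-R_\psi(\lambda))/\hat\sigma(\lambda)\xrightarrow{d}N(0,1)$ as $n\to\infty$.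
   Context: $F^{-1}(p)=\inf\{x:F(x)\ge p\}$ denotes the $p$-th quantile. $\operatorname{CVaR}_\beta$ (conditional value-at-risk) is the distortion risk with uniform weighting on $[\beta,1]$, i.e. $\frac1{1-\beta}\int_\beta^1F^{-1}(p)\,dp$. *)

theory Defs
  imports "HOL-Probability.Probability"
begin

definition quantile :: "(real \<Rightarrow> real) \<Rightarrow> real \<Rightarrow> real" where
  "quantile F p = Inf {x. F x \<ge> p}"

definition CVaR :: "real \<Rightarrow> (real \<Rightarrow> real) \<Rightarrow> real" where
  "CVaR \<beta> F = (1 / (1 - \<beta>)) * (LBINT p=\<beta>..1. quantile F p)"

definition psi_cvar :: "real \<Rightarrow> real \<Rightarrow> real" where
  "psi_cvar \<beta> p = max (p - \<beta>) 0 / (1 - \<beta>)"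

definition order_stat :: "(nat \<Rightarrow> real) \<Rightarrow> nat \<Rightarrow> nat \<Rightarrow> real" where
  "order_stat x n i = sort (map x [0..<n]) ! (i - 1)"

definition R_hat :: "(real \<Rightarrow> real) \<Rightarrow> (nat \<Rightarrow> real) \<Rightarrow> nat \<Rightarrow> real" where
  "R_hat \<psi> x n = (\<Sum>i=1..n. (\<psi> (real i / real n) - \<psi> (real (i - 1) / real n)) * order_stat x n i)"

definition sample_var :: "(nat \<Rightarrow> real) \<Rightarrow> nat \<Rightarrow> real" where
  "sample_var y n = (\<Sum>i<n. (y i - (\<Sum>j<n. y j) / real n)\<^sup>2) / (real n - 1)"

definition sigma2_hat :: "real \<Rightarrow> (nat \<Rightarrow> real) \<Rightarrow> nat \<Rightarrow> real" where
  "sigma2_hat \<beta> x n =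
     sample_var (\<lambda>i. max (x i) (order_stat x n (nat \<lceil>real n * \<beta>\<rceil>))) n / (1 - \<beta>)\<^sup>2"

end

theory Submission
  imports Defs
begin

text \<open>
  Let \<open>G\<^sub>n(s) = s + \<Sum>\<^sub>i (r\<^sub>i - s)\<^sup>+ / (n(1 - \<beta>))\<close> be the empirical Rockafellar--Uryasev
  objective. The estimator equals \<open>G\<^sub>n(\<theta>\<^sub>n)\<close> for the \<open>\<lceil>n\<beta>\<rceil>\<close>-th order statistic \<open>\<theta>\<^sub>n\<close>, which
  minimises \<open>G\<^sub>n\<close>, while \<open>CVaR\<^sub>\<beta> = q + E (r - q)\<^sup>+ / (1 - \<beta>)\<close> for the \<open>\<beta>\<close>-quantile \<open>q\<close>.
  Hence \<open>\<surd>n (R\<^sub>n - CVaR\<^sub>\<beta>) = A\<^sub>n / (1 - \<beta>) - D\<^sub>n\<close>, where \<open>A\<^sub>n\<close> is the normalised sum of the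
  centred excesses \<open>(r\<^sub>i - q)\<^sup>+\<close>, asymptotically normal by the central limit theorem, and
  \<open>0 \<le> D\<^sub>n = \<surd>n (G\<^sub>n(q) - G\<^sub>n(\<theta>\<^sub>n)) \<le> |\<theta>\<^sub>n - q| O\<^sub>P(1)\<close> by the one-sided slopes of \<open>G\<^sub>n\<close>.
  Strict monotonicity of \<open>F\<close> at \<open>q\<close> and the weak law for the empirical distribution function give
  \<open>\<theta>\<^sub>n \<rightarrow> q\<close> in probability, so \<open>D\<^sub>n = o\<^sub>P(1)\<close>. The sample variance of \<open>max(r\<^sub>i, \<theta>\<^sub>n)\<close> differs
  from that of \<open>max(r\<^sub>i, q) = q + (r\<^sub>i - q)\<^sup>+\<close> by \<open>O(|\<theta>\<^sub>n - q|)\<close>, so the variance estimator is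
  consistent, and Slutsky's lemma concludes.
\<close>

lemma square_le_if_abs_le: "\<bar>y\<bar> \<le> B \<Longrightarrow> y\<^sup>2 \<le> (B::real)\<^sup>2"
  using power_mono[of "\<bar>y\<bar>" B 2] by simp

lemma abs_sqrt_diff_le:
  assumes "0 \<le> x" "0 < c"
  shows "\<bar>sqrt x - sqrt c\<bar> \<le> \<bar>x - c\<bar> / sqrt c"
proof -
  have "x - c = (sqrt x - sqrt c) * (sqrt x + sqrt c)"
    using assms by (simp add: algebra_simps)
  then have "\<bar>x - c\<bar> = \<bar>sqrt x - sqrt c\<bar> * (sqrt x + sqrt c)"
    using assms by (simp add: abs_mult)
  moreover have "\<bar>sqrt x - sqrt c\<bar> * sqrt c \<le> \<bar>sqrt x - sqrt c\<bar> * (sqrt x + sqrt c)"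
    using assms by (intro mult_left_mono) auto
  ultimately show ?thesis
    using assms by (simp add: le_divide_eq)
qed

lemma sqrt_mult_divide_real_eq:
  assumes "0 < n"
  shows "sqrt (real n) * z / (real n * c) = z / (sqrt (real n) * c)"
proof -
  have "0 < sqrt (real n)" "real n = sqrt (real n) * sqrt (real n)"
    using assms by simp_all
  then show ?thesis
    by (simp add: divide_simps)
qed

lemma abs_inverse_diff_le:
  fixes s c e :: real
  assumes "c \<noteq> 0" "0 < e" "\<bar>s - c\<bar> \<le> min (\<bar>c\<bar> / 2) (e * c\<^sup>2 / 2)"
  shows "\<bar>1 / s - 1 / c\<bar> \<le> e"
proof -
  have "\<bar>c\<bar> \<le> \<bar>s\<bar> + \<bar>s - c\<bar>"
    using abs_triangle_ineq[of s "c - s"] by (simp add: abs_minus_commute)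
  then have s: "\<bar>c\<bar> / 2 \<le> \<bar>s\<bar>"
    using assms(3) by simp
  then have "s \<noteq> 0"
    using assms(1) by auto
  then have "\<bar>1 / s - 1 / c\<bar> = \<bar>s - c\<bar> / (\<bar>s\<bar> * \<bar>c\<bar>)"
    using assms(1) by (simp add: divide_simps abs_mult abs_minus_commute)
  also have "\<dots> \<le> (e * c\<^sup>2 / 2) / (\<bar>c\<bar> / 2 * \<bar>c\<bar>)"
    using assms s by (intro frac_le mult_right_mono) (auto simp: zero_less_mult_iff)
  also have "\<dots> = e"
    using assms(1) by (simp add: power2_eq_square abs_mult_self_eq)
  finally show ?thesis .
qed

lemma isCont_both_sides_close:
  fixes f :: "real \<Rightarrow> real"
  assumes "isCont f x" "0 < r"
  shows "\<exists>\<epsilon>>0. \<bar>f (x + \<epsilon>) - f x\<bar> < r \<and> \<bar>f (x - \<epsilon>) - f x\<bar> < r"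
proof -
  obtain s where "0 < s" and s: "\<And>y. y \<noteq> x \<and> norm (y - x) < s \<longrightarrow> norm (f y - f x) < r"
    using LIM_D[OF assms(1)[unfolded isCont_def] assms(2)] by auto
  then show ?thesis
    using s[of "x + s/2"] s[of "x - s/2"] by (intro exI[of _ "s/2"]) simp
qed

section \<open>Order statistics\<close>

lemma sum_indicator_eq_card_less:
  fixes n :: nat
  shows "(\<Sum>i<n. indicator A (x i) :: real) = real (card {i. i < n \<and> x i \<in> A})"
proof -
  have "(\<Sum>i<n. indicator A (x i) :: real) = (\<Sum>i\<in>{..<n}. of_bool (x i \<in> A))"
    by (simp add: indicator_def)
  also have "\<dots> = real (card ({..<n} \<inter> {i. x i \<in> A}))"
    by (rule sum_of_bool_eq) simp_all
  also have "{..<n} \<inter> {i. x i \<in> A} = {i. i < n \<and> x i \<in> A}"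
    by auto
  finally show ?thesis .
qed

lemma card_filter_sort_map:
  fixes x :: "nat \<Rightarrow> real"
  shows "card {j. j < n \<and> P (sort (map x [0..<n]) ! j)} = card {i. i < n \<and> P (x i)}"
proof -
  let ?xs = "map x [0..<n]"
  have "length (filter P (sort ?xs)) = length (filter P ?xs)"
    by (metis mset_filter mset_sort size_mset)
  moreover have "length (filter P ?xs) = card {i. i < n \<and> P (x i)}"
    by (auto simp: length_filter_conv_card intro!: arg_cong[where f=card])
  ultimately show ?thesis
    by (simp add: length_filter_conv_card)
qed

lemma sum_sort_map:
  fixes x :: "nat \<Rightarrow> real"
  shows "(\<Sum>j<n. f (sort (map x [0..<n]) ! j)) = (\<Sum>i<n. f (x i))"
proof -
  let ?xs = "map x [0..<n]"
  have "(\<Sum>j<n. f (sort ?xs ! j)) = sum_list (map f (sort ?xs))"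
    by (simp add: sum_list_sum_nth atLeast0LessThan)
  also have "\<dots> = sum_list (map f ?xs)"
    by (metis mset_map mset_sort sum_mset_sum_list)
  also have "\<dots> = (\<Sum>i<n. f (x i))"
    by (simp add: sum_list_sum_nth atLeast0LessThan)
  finally show ?thesis .
qed

lemma card_less_order_stat_le:
  fixes x :: "nat \<Rightarrow> real"
  assumes "1 \<le> k" "k \<le> n"
  shows "card {i. i < n \<and> x i < order_stat x n k} \<le> k - 1"
proof -
  let ?s = "sort (map x [0..<n])"
  have "{j. j < n \<and> ?s ! j < ?s ! (k - 1)} \<subseteq> {..<k - 1}"
  proof
    fix j assume j: "j \<in> {j. j < n \<and> ?s ! j < ?s ! (k - 1)}"
    show "j \<in> {..<k - 1}"
    proof (rule ccontr)
      assume "j \<notin> {..<k - 1}"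
      then have "?s ! (k - 1) \<le> ?s ! j"
        using j by (intro sorted_nth_mono) auto
      then show False using j by auto
    qed
  qed
  then have "card {j. j < n \<and> ?s ! j < ?s ! (k - 1)} \<le> card {..<k - 1}"
    by (intro card_mono) auto
  then show ?thesis
    using card_filter_sort_map[where P="\<lambda>y. y < ?s ! (k - 1)"] by (simp add: order_stat_def)
qed

lemma order_stat_le_iff:
  fixes x :: "nat \<Rightarrow> real"
  assumes "1 \<le> k" "k \<le> n"
  shows "order_stat x n k \<le> t \<longleftrightarrow> k \<le> card {i. i < n \<and> x i \<le> t}"
proof -
  let ?s = "sort (map x [0..<n])"
  have count: "card {i. i < n \<and> x i \<le> t} = card {j. j < n \<and> ?s ! j \<le> t}"
    by (rule card_filter_sort_map[symmetric])
  show ?thesis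
  proof
    assume le: "order_stat x n k \<le> t"
    have "{..<k} \<subseteq> {j. j < n \<and> ?s ! j \<le> t}"
    proof
      fix j assume "j \<in> {..<k}"
      then have "?s ! j \<le> ?s ! (k - 1)" "j < n"
        using assms by (auto intro: sorted_nth_mono)
      then show "j \<in> {j. j < n \<and> ?s ! j \<le> t}"
        using le by (simp add: order_stat_def)
    qed
    then have "card {..<k} \<le> card {j. j < n \<and> ?s ! j \<le> t}"
      by (intro card_mono) auto
    then show "k \<le> card {i. i < n \<and> x i \<le> t}"
      unfolding count by simp
  next
    assume k: "k \<le> card {i. i < n \<and> x i \<le> t}"
    show "order_stat x n k \<le> t"
    proof (rule ccontr)
      assume "\<not> order_stat x n k \<le> t"
      then have "{i. i < n \<and> x i \<le> t} \<subseteq> {i. i < n \<and> x i < order_stat x n k}"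
        by auto
      then have "card {i. i < n \<and> x i \<le> t} \<le> card {i. i < n \<and> x i < order_stat x n k}"
        by (intro card_mono) auto
      then show False
        using k assms card_less_order_stat_le[OF assms, of x] by simp
    qed
  qed
qed

lemma card_greater_order_stat_le:
  fixes x :: "nat \<Rightarrow> real"
  assumes "1 \<le> k" "k \<le> n"
  shows "card {i. i < n \<and> order_stat x n k < x i} \<le> n - k"
proof -
  let ?A = "{i. i < n \<and> x i \<le> order_stat x n k}"
  have "{i. i < n \<and> order_stat x n k < x i} = {..<n} - ?A"
    by auto
  moreover have "card ({..<n} - ?A) = n - card ?A"
    by (subst card_Diff_subset) auto
  moreover have "k \<le> card ?A"
    using order_stat_le_iff[OF assms, of x "order_stat x n k"] by simp
  ultimately show ?thesis by simp
qed

lemma nat_ceiling_mult_bounds: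
  fixes \<beta> :: real
  assumes "0 < \<beta>" "\<beta> < 1" "1 \<le> n"
  defines "k \<equiv> nat \<lceil>real n * \<beta>\<rceil>"
  shows "1 \<le> k" "k \<le> n" "real n * \<beta> \<le> real k" "real k < real n * \<beta> + 1"
proof -
  have pos: "0 < real n * \<beta>" and le: "real n * \<beta> \<le> real n"
    using assms by auto
  have k: "real k = of_int \<lceil>real n * \<beta>\<rceil>"
    unfolding k_def using pos by simp
  show "real n * \<beta> \<le> real k" "real k < real n * \<beta> + 1"
    using k by linarith+
  show "1 \<le> k"
    using k pos by linarith
  show "k \<le> n"
    using k le by (metis ceiling_le_iff nat_int nat_mono of_int_of_nat_eq k_def)
qed

lemma order_stat_ceiling_counts:
  fixes x :: "nat \<Rightarrow> real"
  assumes "0 < \<beta>" "\<beta> < 1" "1 \<le> n"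
  defines "t \<equiv> order_stat x n (nat \<lceil>real n * \<beta>\<rceil>)"
  shows "real (card {i. i < n \<and> t < x i}) \<le> real n * (1 - \<beta>)"
    and "real n * (1 - \<beta>) \<le> real (card {i. i < n \<and> t \<le> x i})"
proof -
  note k = nat_ceiling_mult_bounds[OF assms(1-3)]
  show "real (card {i. i < n \<and> t < x i}) \<le> real n * (1 - \<beta>)"
    using card_greater_order_stat_le[OF k(1,2), of x] k(2,3)
    unfolding t_def by (simp add: of_nat_diff algebra_simps flip: of_nat_le_iff)
  have "{i. i < n \<and> t \<le> x i} = {..<n} - {i. i < n \<and> x i < t}"
    by auto
  then have "card {i. i < n \<and> t \<le> x i} = n - card {i. i < n \<and> x i < t}"
    using card_Diff_subset[of "{i. i < n \<and> x i < t}" "{..<n}"] by auto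
  moreover have "card {i. i < n \<and> x i < t} \<le> nat \<lceil>real n * \<beta>\<rceil> - 1"
    unfolding t_def by (rule card_less_order_stat_le[OF k(1,2)])
  ultimately show "real n * (1 - \<beta>) \<le> real (card {i. i < n \<and> t \<le> x i})"
    using k(1,2,4) by (simp add: of_nat_diff algebra_simps)
qed

lemma card_atMost_less_if_order_stat_ceiling_greater:
  fixes x :: "nat \<Rightarrow> real"
  assumes "0 < \<beta>" "\<beta> < 1" "1 \<le> n" "t < order_stat x n (nat \<lceil>real n * \<beta>\<rceil>)"
  shows "real (card {i. i < n \<and> x i \<le> t}) < real n * \<beta> + 1"
  using order_stat_le_iff[OF nat_ceiling_mult_bounds(1,2)[OF assms(1-3)], of x t]
    nat_ceiling_mult_bounds(4)[OF assms(1-3)] assms(4)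
  by simp

lemma card_atMost_ge_if_order_stat_ceiling_le:
  fixes x :: "nat \<Rightarrow> real"
  assumes "0 < \<beta>" "\<beta> < 1" "1 \<le> n" "order_stat x n (nat \<lceil>real n * \<beta>\<rceil>) \<le> t"
  shows "real n * \<beta> \<le> real (card {i. i < n \<and> x i \<le> t})"
  using order_stat_le_iff[OF nat_ceiling_mult_bounds(1,2)[OF assms(1-3)], of x t]
    nat_ceiling_mult_bounds(3)[OF assms(1-3)] assms(4)
  by simp

section \<open>The empirical CVaR objective\<close>

text \<open>Rockafellar--Uryasev: \<open>CVaR\<^sub>\<beta>\<close> of a distribution is the minimum over \<open>s\<close> of
  \<open>s + E (X - s)\<^sup>+ / (1 - \<beta>)\<close>; this is its empirical version.\<close>
definition cvar_objective :: "real \<Rightarrow> (nat \<Rightarrow> real) \<Rightarrow> nat \<Rightarrow> real \<Rightarrow> real" where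
  "cvar_objective \<beta> x n s = s + (\<Sum>i<n. max (x i - s) 0) / (real n * (1 - \<beta>))"

lemma psi_cvar_increment_below:
  assumes "0 < n" "real i < real n * \<beta>"
  shows "psi_cvar \<beta> (real i / real n) - psi_cvar \<beta> (real (i - 1) / real n) = 0"
proof -
  have "real (i - 1) / real n \<le> real i / real n" "real i / real n < \<beta>"
    using assms by (auto simp: divide_right_mono pos_divide_less_eq mult.commute)
  then show ?thesis
    by (simp add: psi_cvar_def)
qed

lemma psi_cvar_increment_above:
  assumes "\<beta> < 1" "0 < n" "1 \<le> i" "real n * \<beta> \<le> real (i - 1)"
  shows "psi_cvar \<beta> (real i / real n) - psi_cvar \<beta> (real (i - 1) / real n)
    = 1 / (real n * (1 - \<beta>))"
proof -
  have "\<beta> \<le> real (i - 1) / real n" "real (i - 1) = real i - 1"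
    using assms by (auto simp: pos_le_divide_eq mult.commute)
  then show ?thesis
    using assms by (simp add: psi_cvar_def field_simps)
qed

lemma sum_psi_cvar_increments:
  assumes "0 < \<beta>" "\<beta> < 1" "1 \<le> n"
  shows "(\<Sum>i=1..n. psi_cvar \<beta> (real i / real n) - psi_cvar \<beta> (real (i - 1) / real n)) = 1"
  using sum_telescope''[of 0 n "\<lambda>i. psi_cvar \<beta> (real i / real n)"] assms
  by (simp add: psi_cvar_def)

lemma order_stat_mono:
  assumes "1 \<le> j" "j \<le> k" "k \<le> n"
  shows "order_stat x n j \<le> order_stat x n k"
  using assms by (auto simp: order_stat_def intro: sorted_nth_mono)

lemma psi_cvar_increment_mult_order_stat:
  fixes x :: "nat \<Rightarrow> real"
  assumes "0 < \<beta>" "\<beta> < 1" "i \<in> {1..n}"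
  defines "w \<equiv> psi_cvar \<beta> (real i / real n) - psi_cvar \<beta> (real (i - 1) / real n)"
    and "t \<equiv> order_stat x n (nat \<lceil>real n * \<beta>\<rceil>)"
  shows "w * order_stat x n i = w * t + max (order_stat x n i - t) 0 / (real n * (1 - \<beta>))"
proof -
  define k where "k = nat \<lceil>real n * \<beta>\<rceil>"
  have "1 \<le> n"
    using assms(3) by simp
  note k = nat_ceiling_mult_bounds[OF assms(1,2) this, folded k_def]
  show ?thesis
  proof (cases i k rule: linorder_cases)
    case less
    then have "w = 0"
      unfolding w_def using k assms by (intro psi_cvar_increment_below) auto
    moreover have "order_stat x n i \<le> t"
      unfolding t_def k_def[symmetric] using less assms(3) k by (intro order_stat_mono) auto
    ultimately show ?thesis
      by simp
  next
    case equal
    then show ?thesis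
      by (simp add: t_def k_def)
  next
    case greater
    then have "w = 1 / (real n * (1 - \<beta>))"
      unfolding w_def using k assms by (intro psi_cvar_increment_above) auto
    moreover have "t \<le> order_stat x n i"
      unfolding t_def k_def[symmetric] using greater assms(3) k by (intro order_stat_mono) auto
    ultimately show ?thesis
      by (simp add: diff_divide_distrib)
  qed
qed

lemma R_hat_psi_cvar_eq:
  assumes "0 < \<beta>" "\<beta> < 1" "1 \<le> n"
  shows "R_hat (psi_cvar \<beta>) x n = cvar_objective \<beta> x n (order_stat x n (nat \<lceil>real n * \<beta>\<rceil>))"
proof -
  define t where "t = order_stat x n (nat \<lceil>real n * \<beta>\<rceil>)"
  let ?w = "\<lambda>i. psi_cvar \<beta> (real i / real n) - psi_cvar \<beta> (real (i - 1) / real n)"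
  let ?c = "real n * (1 - \<beta>)"
  have "R_hat (psi_cvar \<beta>) x n = (\<Sum>i=1..n. ?w i * t + max (order_stat x n i - t) 0 / ?c)"
    unfolding R_hat_def t_def
    by (rule sum.cong[OF refl psi_cvar_increment_mult_order_stat[OF assms(1,2)]])
  also have "\<dots> = (\<Sum>i=1..n. ?w i) * t + (\<Sum>i=1..n. max (order_stat x n i - t) 0) / ?c"
    by (simp only: sum.distrib sum_distrib_right sum_divide_distrib)
  also have "(\<Sum>i=1..n. max (order_stat x n i - t) 0) = (\<Sum>j<n. max (sort (map x [0..<n]) ! j - t) 0)"
    unfolding order_stat_def by (subst sum_bounds_lt_plus1[symmetric]) simp
  also have "\<dots> = (\<Sum>i<n. max (x i - t) 0)"
    by (rule sum_sort_map)
  finally show ?thesis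
    using sum_psi_cvar_increments[OF assms] by (simp add: cvar_objective_def t_def)
qed

lemma sum_pos_part_subgradient_above:
  fixes x :: "nat \<Rightarrow> real"
  assumes "t \<le> s"
  shows "(\<Sum>i<n. max (x i - t) 0) - (s - t) * (\<Sum>i<n. indicator {t<..} (x i))
    \<le> (\<Sum>i<n. max (x i - s) 0)"
  unfolding sum_distrib_left sum_subtractf[symmetric]
  by (intro sum_mono) (use assms in \<open>auto simp: indicator_def\<close>)

lemma sum_pos_part_subgradient_below:
  fixes x :: "nat \<Rightarrow> real"
  assumes "s \<le> t"
  shows "(\<Sum>i<n. max (x i - t) 0) + (t - s) * (\<Sum>i<n. indicator {t..} (x i))
    \<le> (\<Sum>i<n. max (x i - s) 0)"
  unfolding sum_distrib_left sum.distrib[symmetric]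
  by (intro sum_mono) (use assms in \<open>auto simp: indicator_def\<close>)

lemma cvar_objective_diff:
  assumes "\<beta> < 1" "0 < n"
  shows "real n * (1 - \<beta>) * (cvar_objective \<beta> x n s - cvar_objective \<beta> x n t)
    = real n * (1 - \<beta>) * (s - t) + ((\<Sum>i<n. max (x i - s) 0) - (\<Sum>i<n. max (x i - t) 0))"
proof -
  have "real n * (1 - \<beta>) \<noteq> 0"
    using assms by simp
  then show ?thesis
    by (simp add: cvar_objective_def right_diff_distrib distrib_left)
qed

lemma cvar_objective_order_stat_le:
  assumes "0 < \<beta>" "\<beta> < 1" "1 \<le> n"
  shows "cvar_objective \<beta> x n (order_stat x n (nat \<lceil>real n * \<beta>\<rceil>)) \<le> cvar_objective \<beta> x n s"
proof -
  define t where "t = order_stat x n (nat \<lceil>real n * \<beta>\<rceil>)"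
  define c where "c = real n * (1 - \<beta>)"
  let ?H = "\<lambda>s. \<Sum>i<n. max (x i - s) 0"
  note counts = order_stat_ceiling_counts[OF assms, of x, folded t_def c_def]
  have c: "0 < c"
    using assms by (simp add: c_def)
  have "0 \<le> c * (s - t) + (?H s - ?H t)"
  proof (cases "t \<le> s")
    case True
    have "(s - t) * (\<Sum>i<n. indicator {t<..} (x i)) \<le> (s - t) * c"
      using True counts(1) by (intro mult_left_mono) (auto simp: sum_indicator_eq_card_less)
    then show ?thesis
      using sum_pos_part_subgradient_above[OF True, of x n] by (simp add: algebra_simps)
  next
    case False
    have "(t - s) * c \<le> (t - s) * (\<Sum>i<n. indicator {t..} (x i))"
      using False counts(2) by (intro mult_left_mono) (auto simp: sum_indicator_eq_card_less)
    then show ?thesis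
      using sum_pos_part_subgradient_below[of s t x n] False by (simp add: algebra_simps)
  qed
  then have "0 \<le> c * (cvar_objective \<beta> x n s - cvar_objective \<beta> x n t)"
    using cvar_objective_diff[of \<beta> n x s t] assms by (simp add: c_def)
  then show ?thesis
    using c by (simp add: t_def zero_le_mult_iff)
qed

lemma cvar_objective_diff_le:
  assumes "\<beta> < 1" "0 < n"
  defines "c \<equiv> real n * (1 - \<beta>)"
  shows "cvar_objective \<beta> x n s - cvar_objective \<beta> x n t
    \<le> \<bar>t - s\<bar> * (\<bar>(\<Sum>i<n. indicator {s<..} (x i)) - c\<bar> + \<bar>(\<Sum>i<n. indicator {s..} (x i)) - c\<bar>) / c"
proof -
  let ?H = "\<lambda>s. \<Sum>i<n. max (x i - s) 0"
  let ?N1 = "\<Sum>i<n. indicator {s<..} (x i)" and ?N2 = "\<Sum>i<n. indicator {s..} (x i)"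
  have c: "0 < c"
    using assms by (simp add: c_def)
  have "c * (s - t) + (?H s - ?H t) \<le> \<bar>t - s\<bar> * (\<bar>?N1 - c\<bar> + \<bar>?N2 - c\<bar>)"
  proof (cases "s \<le> t")
    case True
    have "c * (s - t) + (?H s - ?H t) \<le> (t - s) * (?N1 - c)"
      using sum_pos_part_subgradient_above[OF True, of x n] by (simp add: algebra_simps)
    also have "\<dots> \<le> \<bar>t - s\<bar> * \<bar>?N1 - c\<bar>"
      by (simp flip: abs_mult)
    also have "\<dots> \<le> \<bar>t - s\<bar> * (\<bar>?N1 - c\<bar> + \<bar>?N2 - c\<bar>)"
      by (intro mult_left_mono) auto
    finally show ?thesis .
  next
    case False
    have "c * (s - t) + (?H s - ?H t) \<le> (s - t) * (c - ?N2)"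
      using sum_pos_part_subgradient_below[of t s x n] False by (simp add: algebra_simps)
    also have "\<dots> \<le> \<bar>t - s\<bar> * \<bar>?N2 - c\<bar>"
      by (simp add: abs_minus_commute flip: abs_mult)
    also have "\<dots> \<le> \<bar>t - s\<bar> * (\<bar>?N1 - c\<bar> + \<bar>?N2 - c\<bar>)"
      by (intro mult_left_mono) auto
    finally show ?thesis .
  qed
  then show ?thesis
    using cvar_objective_diff[OF assms(1,2), of x s t] c
    by (simp add: c_def pos_le_divide_eq mult.commute)
qed

section \<open>Sample variance\<close>

lemma sample_var_eq:
  fixes y :: "nat \<Rightarrow> real"
  assumes "1 \<le> n"
  shows "sample_var y n = ((\<Sum>i<n. (y i)\<^sup>2) - (\<Sum>i<n. y i)\<^sup>2 / real n) / (real n - 1)"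
proof -
  define c where "c = (\<Sum>i<n. y i) / real n"
  have "(\<Sum>i<n. (y i - c)\<^sup>2) = (\<Sum>i<n. (y i)\<^sup>2 - 2 * c * y i + c\<^sup>2)"
    by (simp add: power2_eq_square algebra_simps)
  also have "\<dots> = (\<Sum>i<n. (y i)\<^sup>2) - 2 * c * (\<Sum>i<n. y i) + real n * c\<^sup>2"
    by (simp add: sum.distrib sum_subtractf sum_distrib_left)
  also have "\<dots> = (\<Sum>i<n. (y i)\<^sup>2) - (\<Sum>i<n. y i)\<^sup>2 / real n"
    using assms by (simp add: c_def power2_eq_square field_simps)
  finally show ?thesis
    by (simp add: sample_var_def c_def)
qed

lemma sample_var_shift: "sample_var (\<lambda>i. c + y i) n = sample_var y n"
proof (cases "n = 0")
  case False
  then have "(\<Sum>j<n. c + y j) / real n = c + (\<Sum>j<n. y j) / real n"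
    by (simp add: sum.distrib field_simps)
  then show ?thesis
    by (simp add: sample_var_def)
qed (simp add: sample_var_def)

lemma sample_var_nonneg: "0 \<le> sample_var y n"
  by (cases "n = 0") (auto simp: sample_var_def intro!: divide_nonneg_nonneg sum_nonneg)

lemma sample_var_deviation_bound:
  fixes y :: "nat \<Rightarrow> real" and m v :: real
  assumes n: "2 \<le> n"
  defines "s1 \<equiv> (\<Sum>i<n. y i - m) / real n"
    and "s2 \<equiv> (\<Sum>i<n. (y i)\<^sup>2 - (v + m\<^sup>2)) / real n"
  shows "\<bar>sample_var y n - v\<bar> \<le> 2 * (\<bar>s2\<bar> + \<bar>s1\<bar> * \<bar>s1\<bar> + 2 * \<bar>m\<bar> * \<bar>s1\<bar>) + 2 * \<bar>v\<bar> / real n"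
proof -
  define d where "d = s2 - s1 * s1 - 2 * m * s1"
  have n1: "1 < real n"
    using n by simp
  have sums: "(\<Sum>i<n. y i) = real n * (s1 + m)" "(\<Sum>i<n. (y i)\<^sup>2) = real n * (s2 + v + m\<^sup>2)"
    using n1 by (simp_all add: s1_def s2_def sum_subtractf field_simps)
  have "real n * (s2 + v + m\<^sup>2) - (real n * (s1 + m))\<^sup>2 / real n = real n * (d + v)"
    using n1 by (simp add: d_def power2_eq_square field_simps)
  then have var: "sample_var y n = real n * (d + v) / (real n - 1)"
    using n by (simp add: sample_var_eq sums)
  have "real n - 1 \<noteq> 0"
    using n1 by simp
  then have dev: "sample_var y n - v = real n / (real n - 1) * d + v / (real n - 1)"
    unfolding var by (simp add: divide_simps) (simp add: algebra_simps)
  have d_bound: "\<bar>d\<bar> \<le> \<bar>s2\<bar> + \<bar>s1\<bar> * \<bar>s1\<bar> + 2 * \<bar>m\<bar> * \<bar>s1\<bar>"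
    unfolding d_def by (simp add: abs_mult abs_triangle_ineq4 order_trans[OF abs_triangle_ineq4])
  have factor: "real n / (real n - 1) \<le> 2" "0 \<le> real n / (real n - 1)"
    using n1 by (simp_all add: divide_le_eq)
  have "\<bar>real n / (real n - 1) * d\<bar> = real n / (real n - 1) * \<bar>d\<bar>"
    by (simp only: abs_mult abs_of_nonneg[OF factor(2)])
  also have "\<dots> \<le> 2 * \<bar>d\<bar>"
    using factor by (intro mult_right_mono) simp_all
  finally have "\<bar>real n / (real n - 1) * d\<bar> \<le> 2 * (\<bar>s2\<bar> + \<bar>s1\<bar> * \<bar>s1\<bar> + 2 * \<bar>m\<bar> * \<bar>s1\<bar>)"
    using d_bound by simp
  moreover have "\<bar>v / (real n - 1)\<bar> \<le> 2 * \<bar>v\<bar> / real n"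
  proof -
    have "\<bar>v\<bar> * real n \<le> \<bar>v\<bar> * (2 * (real n - 1))"
      using n by (intro mult_left_mono) auto
    then show ?thesis
      using n1 by (simp add: abs_divide divide_le_eq le_divide_eq algebra_simps)
  qed
  ultimately show ?thesis
    unfolding dev by linarith
qed

lemma mean_mem_atLeastAtMost:
  fixes u :: "nat \<Rightarrow> real"
  assumes "0 < n" "\<And>i. i < n \<Longrightarrow> u i \<in> {lo..hi}"
  shows "(\<Sum>j<n. u j) / real n \<in> {lo..hi}"
  using sum_mono[of "{..<n}" "\<lambda>_. lo" u] sum_mono[of "{..<n}" u "\<lambda>_. hi"] assms
  by (auto simp: field_simps)

lemma abs_mean_diff_le:
  fixes w u :: "nat \<Rightarrow> real"
  assumes "0 < n" "\<And>i. i < n \<Longrightarrow> \<bar>w i - u i\<bar> \<le> \<delta>"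
  shows "\<bar>(\<Sum>j<n. w j) / real n - (\<Sum>j<n. u j) / real n\<bar> \<le> \<delta>"
proof -
  have "\<bar>(\<Sum>j<n. w j) - (\<Sum>j<n. u j)\<bar> \<le> (\<Sum>j<n. \<bar>w j - u j\<bar>)"
    by (simp add: sum_abs flip: sum_subtractf)
  also have "\<dots> \<le> real n * \<delta>"
    using sum_mono[of "{..<n}" "\<lambda>j. \<bar>w j - u j\<bar>" "\<lambda>_. \<delta>"] assms by simp
  finally show ?thesis
    using assms by (simp add: abs_divide divide_le_eq mult.commute flip: diff_divide_distrib)
qed

lemma sample_var_perturbation_bound:
  fixes w u :: "nat \<Rightarrow> real"
  assumes n: "2 \<le> n"
    and close: "\<And>i. i < n \<Longrightarrow> \<bar>w i - u i\<bar> \<le> \<delta>"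
    and range: "\<And>i. i < n \<Longrightarrow> u i \<in> {lo..hi}"
  shows "\<bar>sample_var w n - sample_var u n\<bar> \<le> 8 * (hi - lo) * \<delta> + 8 * \<delta> * \<delta>"
proof -
  define ub where "ub = (\<Sum>j<n. u j) / real n"
  define wb where "wb = (\<Sum>j<n. w j) / real n"
  define B where "B = 4 * (hi - lo) * \<delta> + 4 * \<delta> * \<delta>"
  have n1: "1 < real n"
    using n by simp
  have "0 \<le> \<delta>"
    using close[of 0] n by (auto intro: order_trans[OF abs_ge_zero])
  have "ub \<in> {lo..hi}"
    unfolding ub_def using n1 range by (intro mean_mem_atLeastAtMost) auto
  then have "0 \<le> B"
    using \<open>0 \<le> \<delta>\<close> by (simp add: B_def)
  have mean: "\<bar>wb - ub\<bar> \<le> \<delta>"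
    unfolding wb_def ub_def using n1 close by (intro abs_mean_diff_le) auto
  have summand: "\<bar>(w i - wb)\<^sup>2 - (u i - ub)\<^sup>2\<bar> \<le> B" if "i < n" for i
  proof -
    define e where "e = (w i - wb) - (u i - ub)"
    have bounds: "\<bar>u i - ub\<bar> \<le> hi - lo" "\<bar>e\<bar> \<le> 2 * \<delta>"
      using range[OF that] \<open>ub \<in> {lo..hi}\<close> close[OF that] mean by (auto simp: e_def)
    have "(w i - wb)\<^sup>2 - (u i - ub)\<^sup>2 = 2 * (u i - ub) * e + e * e"
      by (simp add: e_def power2_eq_square algebra_simps)
    also have "\<bar>\<dots>\<bar> \<le> 2 * \<bar>u i - ub\<bar> * \<bar>e\<bar> + \<bar>e\<bar> * \<bar>e\<bar>"
      by (rule order_trans[OF abs_triangle_ineq]) (simp only: abs_mult abs_numeral order_refl)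
    also have "\<dots> \<le> 2 * (hi - lo) * (2 * \<delta>) + (2 * \<delta>) * (2 * \<delta>)"
      using bounds by (intro add_mono mult_mono) auto
    finally show ?thesis
      by (simp add: B_def algebra_simps)
  qed
  have "\<bar>sample_var w n - sample_var u n\<bar>
      = \<bar>\<Sum>i<n. (w i - wb)\<^sup>2 - (u i - ub)\<^sup>2\<bar> / (real n - 1)"
    using n1 by (simp add: sample_var_def wb_def ub_def abs_divide sum_subtractf flip: diff_divide_distrib)
  also have "\<dots> \<le> real n * B / (real n - 1)"
    using n1 order_trans[OF sum_abs sum_mono[of "{..<n}" _ "\<lambda>_. B"]] summand
    by (intro divide_right_mono) auto
  also have "\<dots> \<le> 2 * B"
    using n1 mult_left_mono[of 2 "real n" B] n \<open>0 \<le> B\<close> by (simp add: pos_divide_le_eq algebra_simps)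
  finally show ?thesis
    by (simp add: B_def algebra_simps)
qed

lemma sample_var_max_perturbation:
  fixes x :: "nat \<Rightarrow> real"
  assumes "2 \<le> n" "\<And>i. i < n \<Longrightarrow> x i \<in> {a..b}"
  shows "\<bar>sample_var (\<lambda>i. max (x i) t) n - sample_var (\<lambda>i. max (x i) s) n\<bar>
    \<le> 8 * (max b s - max a s) * \<bar>t - s\<bar> + 8 * \<bar>t - s\<bar> * \<bar>t - s\<bar>"
proof (rule sample_var_perturbation_bound[OF assms(1)])
  fix i
  assume "i < n"
  then have "x i \<in> {a..b}"
    by (rule assms(2))
  then show "max (x i) s \<in> {max a s..max b s}"
    by (auto simp: max_def)
  show "\<bar>max (x i) t - max (x i) s\<bar> \<le> \<bar>t - s\<bar>"
    by (auto simp: max_def abs_if)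
qed

lemma borel_measurable_sample_var[measurable]:
  assumes [measurable]: "\<And>i. f i \<in> borel_measurable M"
  shows "(\<lambda>\<omega>. sample_var (\<lambda>i. f i \<omega>) n) \<in> borel_measurable M"
  unfolding sample_var_def by measurable

section \<open>Convergence in probability\<close>

definition vanishing_in_prob :: "'a measure \<Rightarrow> (nat \<Rightarrow> 'a \<Rightarrow> real) \<Rightarrow> bool" where
  "vanishing_in_prob M f \<longleftrightarrow>
    (\<forall>e>0. \<forall>d>0. eventually (\<lambda>n. measure M {\<omega>\<in>space M. e < \<bar>f n \<omega>\<bar>} \<le> d) sequentially)"

definition bounded_in_prob :: "'a measure \<Rightarrow> (nat \<Rightarrow> 'a \<Rightarrow> real) \<Rightarrow> bool" where
  "bounded_in_prob M f \<longleftrightarrow>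
    (\<forall>d>0. \<exists>K>0. eventually (\<lambda>n. measure M {\<omega>\<in>space M. K < \<bar>f n \<omega>\<bar>} \<le> d) sequentially)"

lemma vanishing_in_probD:
  "vanishing_in_prob M f \<Longrightarrow> 0 < e \<Longrightarrow> 0 < d \<Longrightarrow>
    eventually (\<lambda>n. measure M {\<omega>\<in>space M. e < \<bar>f n \<omega>\<bar>} \<le> d) sequentially"
  unfolding vanishing_in_prob_def by blast

lemma bounded_in_probD:
  "bounded_in_prob M f \<Longrightarrow> 0 < d \<Longrightarrow>
    \<exists>K>0. eventually (\<lambda>n. measure M {\<omega>\<in>space M. K < \<bar>f n \<omega>\<bar>} \<le> d) sequentially"
  unfolding bounded_in_prob_def by blast

lemma vanishing_imp_bounded_in_prob: "vanishing_in_prob M f \<Longrightarrow> bounded_in_prob M f"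
  unfolding vanishing_in_prob_def bounded_in_prob_def by (meson zero_less_one)

lemma vanishing_in_prob_deterministic:
  assumes "c \<longlonglongrightarrow> 0"
  shows "vanishing_in_prob M (\<lambda>n \<omega>. c n)"
  unfolding vanishing_in_prob_def
proof (intro allI impI)
  fix e d :: real
  assume "0 < e" "0 < d"
  have "eventually (\<lambda>n. \<bar>c n\<bar> < e) sequentially"
    using tendsto_rabs_zero[OF assms] \<open>0 < e\<close> by (rule order_tendstoD)
  then show "eventually (\<lambda>n. measure M {\<omega>\<in>space M. e < \<bar>c n\<bar>} \<le> d) sequentially"
    by eventually_elim (use \<open>0 < d\<close> in auto)
qed

context prob_space
begin

lemma prob_le_prob_Un:
  assumes "A \<subseteq> B \<union> C" "B \<in> events" "C \<in> events"
  shows "prob A \<le> prob B + prob C"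
  using finite_measure_mono[OF assms(1)] measure_Un_le[OF assms(2,3)] assms(2,3) by force

lemma bounded_in_prob_const: "bounded_in_prob M (\<lambda>n \<omega>. c)"
  unfolding bounded_in_prob_def
  by (intro allI impI exI[of _ "\<bar>c\<bar> + 1"]) auto

lemma vanishing_in_prob_dominated:
  assumes [measurable]: "\<And>n. g n \<in> borel_measurable M"
    and dom: "eventually (\<lambda>n. AE \<omega> in M. \<bar>f n \<omega>\<bar> \<le> \<bar>g n \<omega>\<bar>) sequentially"
    and g: "vanishing_in_prob M g"
  shows "vanishing_in_prob M f"
  unfolding vanishing_in_prob_def
proof (intro allI impI)
  fix e d :: real
  assume "0 < e" "0 < d"
  then have "eventually (\<lambda>n. prob {\<omega>\<in>space M. e < \<bar>g n \<omega>\<bar>} \<le> d) sequentially"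
    using g by (intro vanishing_in_probD)
  with dom show "eventually (\<lambda>n. prob {\<omega>\<in>space M. e < \<bar>f n \<omega>\<bar>} \<le> d) sequentially"
  proof eventually_elim
    case (elim n)
    have "prob {\<omega>\<in>space M. e < \<bar>f n \<omega>\<bar>} \<le> prob {\<omega>\<in>space M. e < \<bar>g n \<omega>\<bar>}"
      by (rule finite_measure_mono_AE) (use elim(1) in \<open>auto elim!: eventually_mono\<close>)
    then show ?case
      using elim(2) by simp
  qed
qed

lemma vanishing_in_prob_abs: "vanishing_in_prob M f \<Longrightarrow> vanishing_in_prob M (\<lambda>n \<omega>. \<bar>f n \<omega>\<bar>)"
  by (simp add: vanishing_in_prob_def)

lemma vanishing_in_prob_add:
  assumes [measurable]: "\<And>n. f n \<in> borel_measurable M" "\<And>n. g n \<in> borel_measurable M"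
    and f: "vanishing_in_prob M f" and g: "vanishing_in_prob M g"
  shows "vanishing_in_prob M (\<lambda>n \<omega>. f n \<omega> + g n \<omega>)"
  unfolding vanishing_in_prob_def
proof (intro allI impI)
  fix e d :: real
  assume "0 < e" "0 < d"
  then have "eventually (\<lambda>n. prob {\<omega>\<in>space M. e/2 < \<bar>f n \<omega>\<bar>} \<le> d/2) sequentially"
    "eventually (\<lambda>n. prob {\<omega>\<in>space M. e/2 < \<bar>g n \<omega>\<bar>} \<le> d/2) sequentially"
    using vanishing_in_probD[OF f, of "e/2" "d/2"] vanishing_in_probD[OF g, of "e/2" "d/2"] by auto
  then show "eventually (\<lambda>n. prob {\<omega>\<in>space M. e < \<bar>f n \<omega> + g n \<omega>\<bar>} \<le> d) sequentially"
  proof eventually_elim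
    case (elim n)
    have "prob {\<omega>\<in>space M. e < \<bar>f n \<omega> + g n \<omega>\<bar>}
        \<le> prob {\<omega>\<in>space M. e/2 < \<bar>f n \<omega>\<bar>} + prob {\<omega>\<in>space M. e/2 < \<bar>g n \<omega>\<bar>}"
      by (rule prob_le_prob_Un) auto
    then show ?case
      using elim by simp
  qed
qed

lemma vanishing_in_prob_cmult:
  assumes "vanishing_in_prob M f"
  shows "vanishing_in_prob M (\<lambda>n \<omega>. c * f n \<omega>)"
proof (cases "c = 0")
  case False
  have "{\<omega>\<in>space M. e < \<bar>c * f n \<omega>\<bar>} = {\<omega>\<in>space M. e / \<bar>c\<bar> < \<bar>f n \<omega>\<bar>}" for e n
    using False by (auto simp: abs_mult divide_less_eq mult.commute)
  then show ?thesis
    using assms False by (simp add: vanishing_in_prob_def)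
qed (auto simp: vanishing_in_prob_def)

lemma vanishing_in_prob_mult:
  assumes [measurable]: "\<And>n. f n \<in> borel_measurable M" "\<And>n. g n \<in> borel_measurable M"
    and f: "bounded_in_prob M f" and g: "vanishing_in_prob M g"
  shows "vanishing_in_prob M (\<lambda>n \<omega>. f n \<omega> * g n \<omega>)"
  unfolding vanishing_in_prob_def
proof (intro allI impI)
  fix e d :: real
  assume "0 < e" "0 < d"
  then obtain K where "0 < K"
    and K: "eventually (\<lambda>n. prob {\<omega>\<in>space M. K < \<bar>f n \<omega>\<bar>} \<le> d/2) sequentially"
    using bounded_in_probD[OF f, of "d/2"] by auto
  have "eventually (\<lambda>n. prob {\<omega>\<in>space M. e/K < \<bar>g n \<omega>\<bar>} \<le> d/2) sequentially"
    using vanishing_in_probD[OF g, of "e/K" "d/2"] \<open>0 < e\<close> \<open>0 < d\<close> \<open>0 < K\<close> by auto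
  with K show "eventually (\<lambda>n. prob {\<omega>\<in>space M. e < \<bar>f n \<omega> * g n \<omega>\<bar>} \<le> d) sequentially"
  proof eventually_elim
    case (elim n)
    have "{\<omega>\<in>space M. e < \<bar>f n \<omega> * g n \<omega>\<bar>}
        \<subseteq> {\<omega>\<in>space M. K < \<bar>f n \<omega>\<bar>} \<union> {\<omega>\<in>space M. e/K < \<bar>g n \<omega>\<bar>}"
    proof
      fix \<omega>
      assume \<omega>: "\<omega> \<in> {\<omega>\<in>space M. e < \<bar>f n \<omega> * g n \<omega>\<bar>}"
      show "\<omega> \<in> {\<omega>\<in>space M. K < \<bar>f n \<omega>\<bar>} \<union> {\<omega>\<in>space M. e/K < \<bar>g n \<omega>\<bar>}"
      proof (cases "K < \<bar>f n \<omega>\<bar>")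
        case False
        then have "\<bar>f n \<omega> * g n \<omega>\<bar> \<le> K * \<bar>g n \<omega>\<bar>"
          by (simp add: abs_mult mult_right_mono)
        then show ?thesis
          using \<omega> \<open>0 < K\<close> by (simp add: pos_divide_less_eq mult.commute)
      qed (use \<omega> in simp)
    qed
    then have "prob {\<omega>\<in>space M. e < \<bar>f n \<omega> * g n \<omega>\<bar>}
        \<le> prob {\<omega>\<in>space M. K < \<bar>f n \<omega>\<bar>} + prob {\<omega>\<in>space M. e/K < \<bar>g n \<omega>\<bar>}"
      by (rule prob_le_prob_Un) auto
    then show ?case
      using elim by simp
  qed
qed

lemma bounded_in_prob_add:
  assumes [measurable]: "\<And>n. f n \<in> borel_measurable M" "\<And>n. g n \<in> borel_measurable M"
    and f: "bounded_in_prob M f" and g: "bounded_in_prob M g"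
  shows "bounded_in_prob M (\<lambda>n \<omega>. f n \<omega> + g n \<omega>)"
  unfolding bounded_in_prob_def
proof (intro allI impI)
  fix d :: real
  assume "0 < d"
  then obtain K1 K2 where "0 < K1" "0 < K2"
    and K1: "eventually (\<lambda>n. prob {\<omega>\<in>space M. K1 < \<bar>f n \<omega>\<bar>} \<le> d/2) sequentially"
    and K2: "eventually (\<lambda>n. prob {\<omega>\<in>space M. K2 < \<bar>g n \<omega>\<bar>} \<le> d/2) sequentially"
    using bounded_in_probD[OF f, of "d/2"] bounded_in_probD[OF g, of "d/2"] by auto
  from K1 K2 have "eventually (\<lambda>n. prob {\<omega>\<in>space M. K1 + K2 < \<bar>f n \<omega> + g n \<omega>\<bar>} \<le> d) sequentially"
  proof eventually_elim
    case (elim n)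
    have "prob {\<omega>\<in>space M. K1 + K2 < \<bar>f n \<omega> + g n \<omega>\<bar>}
        \<le> prob {\<omega>\<in>space M. K1 < \<bar>f n \<omega>\<bar>} + prob {\<omega>\<in>space M. K2 < \<bar>g n \<omega>\<bar>}"
      by (rule prob_le_prob_Un) auto
    then show ?case
      using elim by simp
  qed
  then show "\<exists>K>0. eventually (\<lambda>n. prob {\<omega>\<in>space M. K < \<bar>f n \<omega> + g n \<omega>\<bar>} \<le> d) sequentially"
    using \<open>0 < K1\<close> \<open>0 < K2\<close> by (intro exI[of _ "K1 + K2"]) auto
qed

lemma bounded_in_prob_cmult:
  assumes [measurable]: "\<And>n. f n \<in> borel_measurable M" and f: "bounded_in_prob M f"
  shows "bounded_in_prob M (\<lambda>n \<omega>. c * f n \<omega>)"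
  unfolding bounded_in_prob_def
proof (intro allI impI)
  fix d :: real
  assume "0 < d"
  then obtain K where "0 < K" and K: "eventually (\<lambda>n. prob {\<omega>\<in>space M. K < \<bar>f n \<omega>\<bar>} \<le> d) sequentially"
    using bounded_in_probD[OF f] by blast
  have "\<bar>c * y\<bar> \<le> (\<bar>c\<bar> + 1) * K" if "\<bar>y\<bar> \<le> K" for y
    using that \<open>0 < K\<close> by (simp add: abs_mult mult_mono)
  then have mono: "prob {\<omega>\<in>space M. (\<bar>c\<bar> + 1) * K < \<bar>c * f n \<omega>\<bar>}
      \<le> prob {\<omega>\<in>space M. K < \<bar>f n \<omega>\<bar>}" for n
    by (intro finite_measure_mono) (auto simp: not_le[symmetric])
  have "eventually (\<lambda>n. prob {\<omega>\<in>space M. (\<bar>c\<bar> + 1) * K < \<bar>c * f n \<omega>\<bar>} \<le> d) sequentially"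
    using K by eventually_elim (rule order_trans[OF mono])
  then show "\<exists>K>0. eventually (\<lambda>n. prob {\<omega>\<in>space M. K < \<bar>c * f n \<omega>\<bar>} \<le> d) sequentially"
    using \<open>0 < K\<close> by (intro exI[of _ "(\<bar>c\<bar> + 1) * K"]) auto
qed

text \<open>Continuous mapping at a nonzero limit; \<open>x / 0 = 0\<close> does no harm since \<open>S n\<close> is eventually
  bounded away from \<open>0\<close> with high probability.\<close>
lemma vanishing_in_prob_inverse:
  assumes [measurable]: "\<And>n. S n \<in> borel_measurable M"
    and S: "vanishing_in_prob M (\<lambda>n \<omega>. S n \<omega> - c)" and "c \<noteq> 0"
  shows "vanishing_in_prob M (\<lambda>n \<omega>. 1 / S n \<omega> - 1 / c)"
  unfolding vanishing_in_prob_def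
proof (intro allI impI)
  fix e d :: real
  assume "0 < e" "0 < d"
  define e' where "e' = min (\<bar>c\<bar> / 2) (e * c\<^sup>2 / 2)"
  have "0 < e'"
    using \<open>0 < e\<close> \<open>c \<noteq> 0\<close> by (simp add: e'_def)
  have close: "\<bar>1 / s - 1 / c\<bar> \<le> e" if "\<bar>s - c\<bar> \<le> e'" for s
    using abs_inverse_diff_le[OF \<open>c \<noteq> 0\<close> \<open>0 < e\<close>] that by (simp add: e'_def)
  have "eventually (\<lambda>n. prob {\<omega>\<in>space M. e' < \<bar>S n \<omega> - c\<bar>} \<le> d) sequentially"
    using S \<open>0 < e'\<close> \<open>0 < d\<close> by (rule vanishing_in_probD)
  then show "eventually (\<lambda>n. prob {\<omega>\<in>space M. e < \<bar>1 / S n \<omega> - 1 / c\<bar>} \<le> d) sequentially"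
  proof eventually_elim
    case (elim n)
    have "{\<omega>\<in>space M. e < \<bar>1 / S n \<omega> - 1 / c\<bar>} \<subseteq> {\<omega>\<in>space M. e' < \<bar>S n \<omega> - c\<bar>}"
    proof
      fix \<omega>
      assume "\<omega> \<in> {\<omega>\<in>space M. e < \<bar>1 / S n \<omega> - 1 / c\<bar>}"
      then show "\<omega> \<in> {\<omega>\<in>space M. e' < \<bar>S n \<omega> - c\<bar>}"
        using close[of "S n \<omega>"] by (auto simp: not_le[symmetric])
    qed
    then have "prob {\<omega>\<in>space M. e < \<bar>1 / S n \<omega> - 1 / c\<bar>} \<le> prob {\<omega>\<in>space M. e' < \<bar>S n \<omega> - c\<bar>}"
      by (rule finite_measure_mono) measurable
    then show ?case
      using elim by simp
  qed
qed

lemma vanishing_in_prob_sqrt: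
  assumes [measurable]: "\<And>n. f n \<in> borel_measurable M"
    and nonneg: "\<And>n \<omega>. 0 \<le> f n \<omega>"
    and f: "vanishing_in_prob M (\<lambda>n \<omega>. f n \<omega> - c)" and "0 < c"
  shows "vanishing_in_prob M (\<lambda>n \<omega>. sqrt (f n \<omega>) - sqrt c)"
proof (rule vanishing_in_prob_dominated[OF _ _ vanishing_in_prob_cmult[OF f]])
  show "eventually (\<lambda>n. AE \<omega> in M. \<bar>sqrt (f n \<omega>) - sqrt c\<bar> \<le> \<bar>1 / sqrt c * (f n \<omega> - c)\<bar>)
      sequentially"
    using abs_sqrt_diff_le[OF nonneg \<open>0 < c\<close>] \<open>0 < c\<close> by (simp add: abs_mult)
qed simp

lemma expectation_square_sum_indep:
  fixes Y :: "nat \<Rightarrow> 'a \<Rightarrow> real"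
  assumes indep: "indep_vars (\<lambda>_. borel) Y UNIV"
    and [measurable]: "\<And>i. Y i \<in> borel_measurable M"
    and bound: "\<And>i. AE \<omega> in M. \<bar>Y i \<omega>\<bar> \<le> B"
    and centered: "\<And>i. expectation (Y i) = 0"
  shows "expectation (\<lambda>\<omega>. (\<Sum>i<n. Y i \<omega>)\<^sup>2) = (\<Sum>i<n. expectation (\<lambda>\<omega>. (Y i \<omega>)\<^sup>2))"
proof -
  have int: "integrable M (Y i)" for i
    using bound by (intro integrable_const_bound) auto
  have int2: "integrable M (\<lambda>\<omega>. Y i \<omega> * Y j \<omega>)" for i j
  proof (rule integrable_const_bound[where B="B * B"])
    show "AE x in M. norm (Y i x * Y j x) \<le> B * B"
      using bound[of i] bound[of j] by eventually_elim (auto simp: abs_mult intro!: mult_mono)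
  qed simp
  have cross: "expectation (\<lambda>\<omega>. Y i \<omega> * Y j \<omega>) = 0" if "i \<noteq> j" for i j
  proof -
    have "indep_vars (\<lambda>_. borel) Y {i, j}"
      using indep_vars_subset[OF indep] by auto
    then have "(\<integral>\<omega>. (\<Prod>l\<in>{i, j}. Y l \<omega>) \<partial>M) = (\<Prod>l\<in>{i, j}. \<integral>\<omega>. Y l \<omega> \<partial>M)"
      by (intro indep_vars_lebesgue_integral) (auto intro: int)
    then show ?thesis
      using centered that by simp
  qed
  have "expectation (\<lambda>\<omega>. (\<Sum>i<n. Y i \<omega>)\<^sup>2) = (\<Sum>i<n. \<Sum>j<n. expectation (\<lambda>\<omega>. Y i \<omega> * Y j \<omega>))"
    using int2 by (simp add: power2_eq_square sum_product Bochner_Integration.integral_sum)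
  also have "\<dots> = (\<Sum>i<n. \<Sum>j<n. if j = i then expectation (\<lambda>\<omega>. (Y i \<omega>)\<^sup>2) else 0)"
    by (intro sum.cong refl) (auto simp: cross power2_eq_square)
  finally show ?thesis
    by simp
qed

lemma prob_abs_sum_ge_le:
  fixes Y :: "nat \<Rightarrow> 'a \<Rightarrow> real"
  assumes indep: "indep_vars (\<lambda>_. borel) Y UNIV"
    and [measurable]: "\<And>i. Y i \<in> borel_measurable M"
    and bound: "\<And>i. AE \<omega> in M. \<bar>Y i \<omega>\<bar> \<le> B"
    and centered: "\<And>i. expectation (Y i) = 0"
    and "0 < c"
  shows "prob {\<omega>\<in>space M. c \<le> \<bar>\<Sum>i<n. Y i \<omega>\<bar>} \<le> real n * B\<^sup>2 / c\<^sup>2"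
proof -
  let ?S = "\<lambda>\<omega>. \<Sum>i<n. Y i \<omega>"
  have int: "integrable M (Y i)" for i
    using bound by (intro integrable_const_bound) auto
  have square: "AE \<omega> in M. (Y i \<omega>)\<^sup>2 \<le> B\<^sup>2" for i
    using bound[of i] by eventually_elim (rule square_le_if_abs_le)
  have int_square: "integrable M (\<lambda>\<omega>. (Y i \<omega>)\<^sup>2)" for i
    using square[of i] by (intro integrable_const_bound[where B="B\<^sup>2"]) (auto elim!: eventually_mono)
  have "AE \<omega> in M. \<forall>i. \<bar>Y i \<omega>\<bar> \<le> B"
    using bound by (simp add: AE_all_countable)
  then have "AE \<omega> in M. \<bar>?S \<omega>\<bar> \<le> real n * B"
    by eventually_elim (use order_trans[OF sum_abs sum_mono[of "{..<n}" _ "\<lambda>_. B"]] in auto)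
  then have int_S: "integrable M (\<lambda>\<omega>. (?S \<omega>)\<^sup>2)"
    by (intro integrable_const_bound[where B="(real n * B)\<^sup>2"])
      (auto elim!: eventually_mono intro: square_le_if_abs_le)
  have mean: "expectation ?S = 0"
    using int centered by simp
  have "prob {\<omega>\<in>space M. c \<le> \<bar>?S \<omega>\<bar>} \<le> variance ?S / c\<^sup>2"
    using Chebyshev_inequality[OF _ int_S, of c] \<open>0 < c\<close> mean by simp
  also have "variance ?S = (\<Sum>i<n. expectation (\<lambda>\<omega>. (Y i \<omega>)\<^sup>2))"
    using mean expectation_square_sum_indep[OF indep _ bound centered] by simp
  also have "\<dots> \<le> (\<Sum>i<n. B\<^sup>2)"
    using square int_square by (intro sum_mono integral_le_const) auto
  finally show ?thesis
    using \<open>0 < c\<close> by (simp add: divide_right_mono)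
qed

lemma vanishing_in_prob_mean_indep:
  fixes Y :: "nat \<Rightarrow> 'a \<Rightarrow> real"
  assumes indep: "indep_vars (\<lambda>_. borel) Y UNIV"
    and [measurable]: "\<And>i. Y i \<in> borel_measurable M"
    and bound: "\<And>i. AE \<omega> in M. \<bar>Y i \<omega>\<bar> \<le> B"
    and centered: "\<And>i. expectation (Y i) = 0"
  shows "vanishing_in_prob M (\<lambda>n \<omega>. (\<Sum>i<n. Y i \<omega>) / real n)"
  unfolding vanishing_in_prob_def
proof (intro allI impI)
  fix e d :: real
  assume "0 < e" "0 < d"
  have "(\<lambda>n. B\<^sup>2 / e\<^sup>2 / real n) \<longlonglongrightarrow> 0"
    by (rule lim_const_over_n)
  then have "eventually (\<lambda>n. B\<^sup>2 / e\<^sup>2 / real n < d) sequentially"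
    using \<open>0 < d\<close> by (rule order_tendstoD)
  with eventually_gt_at_top[of 0]
  show "eventually (\<lambda>n. prob {\<omega>\<in>space M. e < \<bar>(\<Sum>i<n. Y i \<omega>) / real n\<bar>} \<le> d) sequentially"
  proof eventually_elim
    case (elim n)
    have "prob {\<omega>\<in>space M. e < \<bar>(\<Sum>i<n. Y i \<omega>) / real n\<bar>}
        \<le> prob {\<omega>\<in>space M. e * real n \<le> \<bar>\<Sum>i<n. Y i \<omega>\<bar>}"
      using elim by (intro finite_measure_mono) (auto simp: abs_divide less_divide_eq)
    also have "\<dots> \<le> real n * B\<^sup>2 / (e * real n)\<^sup>2"
      using elim \<open>0 < e\<close> by (intro prob_abs_sum_ge_le[OF indep _ bound centered]) auto
    also have "\<dots> = B\<^sup>2 / e\<^sup>2 / real n"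
      using elim \<open>0 < e\<close> by (simp add: power2_eq_square field_simps)
    finally show ?case
      using elim by simp
  qed
qed

lemma bounded_in_prob_sum_div_sqrt_indep:
  fixes Y :: "nat \<Rightarrow> 'a \<Rightarrow> real"
  assumes indep: "indep_vars (\<lambda>_. borel) Y UNIV"
    and [measurable]: "\<And>i. Y i \<in> borel_measurable M"
    and bound: "\<And>i. AE \<omega> in M. \<bar>Y i \<omega>\<bar> \<le> B"
    and centered: "\<And>i. expectation (Y i) = 0"
  shows "bounded_in_prob M (\<lambda>n \<omega>. (\<Sum>i<n. Y i \<omega>) / sqrt (real n))"
  unfolding bounded_in_prob_def
proof (intro allI impI)
  fix d :: real
  assume "0 < d"
  define K where "K = sqrt (B\<^sup>2 / d) + 1"
  have "0 < K"
    using \<open>0 < d\<close> by (simp add: K_def add_nonneg_pos)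
  have "B\<^sup>2 / d = (sqrt (B\<^sup>2 / d))\<^sup>2"
    using \<open>0 < d\<close> by simp
  also have "\<dots> \<le> K\<^sup>2"
    unfolding K_def using \<open>0 < d\<close> by (intro power_mono) auto
  finally have "B\<^sup>2 / d \<le> K\<^sup>2" .
  then have "B\<^sup>2 / K\<^sup>2 \<le> d"
    using \<open>0 < d\<close> \<open>0 < K\<close> by (simp add: divide_le_eq mult.commute)
  have "eventually (\<lambda>n. prob {\<omega>\<in>space M. K < \<bar>(\<Sum>i<n. Y i \<omega>) / sqrt (real n)\<bar>} \<le> d) sequentially"
    using eventually_gt_at_top[of 0]
  proof eventually_elim
    case (elim n)
    have "prob {\<omega>\<in>space M. K < \<bar>(\<Sum>i<n. Y i \<omega>) / sqrt (real n)\<bar>}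
        \<le> prob {\<omega>\<in>space M. K * sqrt (real n) \<le> \<bar>\<Sum>i<n. Y i \<omega>\<bar>}"
      using elim by (intro finite_measure_mono) (auto simp: abs_divide less_divide_eq)
    also have "\<dots> \<le> real n * B\<^sup>2 / (K * sqrt (real n))\<^sup>2"
      using elim \<open>0 < K\<close> by (intro prob_abs_sum_ge_le[OF indep _ bound centered]) auto
    also have "\<dots> = B\<^sup>2 / K\<^sup>2"
      using elim \<open>0 < K\<close> by (simp add: power_mult_distrib)
    finally show ?case
      using \<open>B\<^sup>2 / K\<^sup>2 \<le> d\<close> by simp
  qed
  then show "\<exists>K>0. eventually (\<lambda>n. prob {\<omega>\<in>space M. K < \<bar>(\<Sum>i<n. Y i \<omega>) / sqrt (real n)\<bar>} \<le> d)
      sequentially"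
    using \<open>0 < K\<close> by blast
qed

lemma cdf_distr_eq:
  assumes [measurable]: "f \<in> borel_measurable M"
  shows "cdf (distr M borel f) x = prob {\<omega>\<in>space M. f \<omega> \<le> x}"
  by (simp add: cdf_def measure_distr vimage_def Int_def conj_commute)

lemma weak_conv_m_vanishing_diff:
  assumes [measurable]: "\<And>n. Z n \<in> borel_measurable M" "\<And>n. T n \<in> borel_measurable M"
    and cont: "\<And>x. isCont (cdf N) x"
    and Z: "weak_conv_m (\<lambda>n. distr M borel (Z n)) N"
    and diff: "vanishing_in_prob M (\<lambda>n \<omega>. T n \<omega> - Z n \<omega>)"
  shows "weak_conv_m (\<lambda>n. distr M borel (T n)) N"
  unfolding weak_conv_m_def weak_conv_def
proof (intro allI impI)
  fix x
  let ?P = "cdf N"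
  have Z_cdf: "(\<lambda>n. prob {\<omega>\<in>space M. Z n \<omega> \<le> y}) \<longlonglongrightarrow> ?P y" for y
    using Z cont[of y] by (simp add: weak_conv_m_def weak_conv_def cdf_distr_eq)
  show "(\<lambda>n. cdf (distr M borel (T n)) x) \<longlonglongrightarrow> ?P x"
    unfolding cdf_distr_eq[OF assms(2)]
  proof (rule LIMSEQ_I)
    fix r :: real
    assume "0 < r"
    obtain \<epsilon> where "0 < \<epsilon>" and \<epsilon>: "\<bar>?P (x + \<epsilon>) - ?P x\<bar> < r/4" "\<bar>?P (x - \<epsilon>) - ?P x\<bar> < r/4"
      using isCont_both_sides_close[OF cont[of x], of "r/4"] \<open>0 < r\<close> by auto
    let ?E = "\<lambda>n. {\<omega>\<in>space M. \<epsilon> < \<bar>T n \<omega> - Z n \<omega>\<bar>}"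
    have "eventually (\<lambda>n. \<bar>prob {\<omega>\<in>space M. Z n \<omega> \<le> x + \<epsilon>} - ?P (x + \<epsilon>)\<bar> < r/4) sequentially"
      "eventually (\<lambda>n. \<bar>prob {\<omega>\<in>space M. Z n \<omega> \<le> x - \<epsilon>} - ?P (x - \<epsilon>)\<bar> < r/4) sequentially"
      using Z_cdf[of "x + \<epsilon>", unfolded tendsto_iff dist_real_def, rule_format, of "r/4"]
        Z_cdf[of "x - \<epsilon>", unfolded tendsto_iff dist_real_def, rule_format, of "r/4"] \<open>0 < r\<close>
      by simp_all
    moreover have "eventually (\<lambda>n. prob (?E n) \<le> r/4) sequentially"
      using diff \<open>0 < \<epsilon>\<close> \<open>0 < r\<close> by (intro vanishing_in_probD) auto
    ultimately have "eventually (\<lambda>n. norm (prob {\<omega>\<in>space M. T n \<omega> \<le> x} - ?P x) < r) sequentially"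
    proof eventually_elim
      case (elim n)
      have "prob {\<omega>\<in>space M. T n \<omega> \<le> x} \<le> prob {\<omega>\<in>space M. Z n \<omega> \<le> x + \<epsilon>} + prob (?E n)"
        by (rule prob_le_prob_Un) auto
      moreover have "prob {\<omega>\<in>space M. Z n \<omega> \<le> x - \<epsilon>} \<le> prob {\<omega>\<in>space M. T n \<omega> \<le> x} + prob (?E n)"
        by (rule prob_le_prob_Un) auto
      ultimately show ?case
        using elim \<epsilon> unfolding real_norm_def abs_less_iff by (intro conjI) linarith+
    qed
    then show "\<exists>no. \<forall>n\<ge>no. norm (prob {\<omega>\<in>space M. T n \<omega> \<le> x} - ?P x) < r"
      by (simp add: eventually_sequentially)
  qed
qed

end

lemma isCont_cdf_std_normal: "isCont (cdf std_normal_distribution) x"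
proof -
  interpret real_distribution std_normal_distribution
    by (rule real_dist_normal_dist)
  have "emeasure std_normal_distribution {x} = 0"
    using AE_lborel_singleton[of x]
    by (subst emeasure_density) (auto intro!: nn_integral_zero' elim!: eventually_mono)
  then show ?thesis
    by (simp add: isCont_cdf measure_def)
qed

section \<open>The i.i.d. bounded sample\<close>

locale cvar_clt_setting = prob_space M for M :: "'s measure" +
  fixes X :: "nat \<Rightarrow> 's \<Rightarrow> real" and \<beta> a b :: real
  assumes beta: "0 < \<beta>" "\<beta> < 1"
    and measurable_X[measurable]: "\<And>i. X i \<in> borel_measurable M"
    and indep: "indep_vars (\<lambda>_. borel) X UNIV"
    and ident: "\<And>i. distr M borel (X i) = distr M borel (X 0)"
    and bounded: "AE \<omega> in M. X 0 \<omega> \<in> {a..b}"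
    and cont: "continuous_on UNIV (cdf (distr M borel (X 0)))"
    and strict: "strict_mono_on {x. 0 < cdf (distr M borel (X 0)) x \<and> cdf (distr M borel (X 0)) x < 1}
                   (cdf (distr M borel (X 0)))"
begin

abbreviation "\<mu> \<equiv> distr M borel (X 0)"
abbreviation "F \<equiv> cdf \<mu>"

sublocale mu: real_distribution \<mu>
  by simp

lemma AE_mu_bounded: "AE x in \<mu>. x \<in> {a..b}"
  using bounded by (subst AE_distr_iff) auto

lemma AE_distr_X_iff:
  assumes "{x. P x} \<in> sets borel"
  shows "(AE \<omega> in M. P (X i \<omega>)) \<longleftrightarrow> (AE x in \<mu>. P x)"
proof -
  have "(AE \<omega> in M. P (X i \<omega>)) \<longleftrightarrow> (AE x in distr M borel (X i). P x)"
    using assms by (simp add: AE_distr_iff)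
  then show ?thesis
    unfolding ident[of i] .
qed

lemma AE_X_bounded: "AE \<omega> in M. \<forall>i. X i \<omega> \<in> {a..b}"
proof -
  have "AE \<omega> in M. X i \<omega> \<in> {a..b}" for i
    using AE_mu_bounded AE_distr_X_iff[of "\<lambda>x. x \<in> {a..b}" i] by simp
  then show ?thesis
    by (simp add: AE_all_countable)
qed

lemma expectation_comp_X:
  fixes g :: "real \<Rightarrow> real"
  assumes [measurable]: "g \<in> borel_measurable borel"
  shows "expectation (\<lambda>\<omega>. g (X i \<omega>)) = (\<integral>x. g x \<partial>\<mu>)"
  using integral_distr[of "X i" M borel g] by (simp add: ident[of i])

lemma isCont_F: "isCont F x"
  using cont by (simp add: continuous_on_eq_continuous_at)

lemma exists_F_eq_beta: "\<exists>q. F q = \<beta>"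
proof -
  have "eventually (\<lambda>x. F x < \<beta>) at_bot"
    by (rule order_tendstoD(2)[OF mu.cdf_lim_at_bot beta(1)])
  then obtain u where u: "F u < \<beta>"
    by (metis eventually_at_bot_linorder order_refl)
  have "eventually (\<lambda>x. \<beta> < F x) at_top"
    by (rule order_tendstoD(1)[OF mu.cdf_lim_at_top_prob beta(2)])
  then obtain w where w: "\<beta> < F w"
    by (metis eventually_at_top_linorder order_refl)
  have "u \<le> w"
    using mu.cdf_nondecreasing[of w u] u w by fastforce
  then show ?thesis
    using IVT'[of F u \<beta> w] u w continuous_on_subset[OF cont] by auto
qed

text \<open>The \<open>\<beta>\<close>-quantile; by strict monotonicity it is \<open>quantile F \<beta>\<close>, but only \<open>F q = \<beta>\<close> is used.\<close>
definition q :: real where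
  "q = (SOME q. F q = \<beta>)"

lemma F_q: "F q = \<beta>"
  unfolding q_def using exists_F_eq_beta by (rule someI_ex)

lemma F_q_minus_less:
  assumes "0 < e"
  shows "F (q - e) < \<beta>"
proof -
  have "F (q - e) \<le> \<beta>"
    using mu.cdf_nondecreasing[of "q - e" q] assms F_q by simp
  moreover have "F (q - e) \<noteq> F q"
    using strict_mono_onD[OF strict, of "q - e" q] F_q beta assms
    by (cases "F (q - e) = \<beta>") auto
  ultimately show ?thesis
    using F_q by simp
qed

lemma F_q_plus_greater:
  assumes "0 < e"
  shows "\<beta> < F (q + e)"
proof -
  have "\<beta> \<le> F (q + e)"
    using mu.cdf_nondecreasing[of q "q + e"] assms F_q by simp
  moreover have "F q \<noteq> F (q + e)"
    using strict_mono_onD[OF strict, of q "q + e"] F_q beta assms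
    by (cases "F (q + e) = \<beta>") auto
  ultimately show ?thesis
    using F_q by simp
qed

lemma measure_greaterThan_q: "measure \<mu> {q<..} = 1 - \<beta>"
  using mu.prob_compl[of "{..q}"] F_q by (simp add: cdf_def Compl_eq_Diff_UNIV[symmetric])

lemma measure_atLeast_q: "measure \<mu> {q..} = 1 - \<beta>"
proof -
  have "measure \<mu> {q} = 0"
    using isCont_F[of q] mu.isCont_cdf by simp
  moreover have "{q..} = {q<..} \<union> {q}"
    by auto
  ultimately show ?thesis
    using mu.finite_measure_Union[of "{q<..}" "{q}"] measure_greaterThan_q by simp
qed

definition excess :: "real \<Rightarrow> real" where
  "excess x = max (x - q) 0"

definition mean_excess :: real where
  "mean_excess = (\<integral>x. excess x \<partial>\<mu>)"

definition var_excess :: real where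
  "var_excess = (\<integral>x. (excess x - mean_excess)\<^sup>2 \<partial>\<mu>)"

lemma excess_measurable[measurable]: "excess \<in> borel_measurable borel"
  unfolding excess_def by measurable

lemma AE_excess_bounded: "AE x in \<mu>. \<bar>excess x\<bar> \<le> \<bar>a\<bar> + \<bar>b\<bar> + \<bar>q\<bar>"
  using AE_mu_bounded by eventually_elim (auto simp: excess_def)

lemma AE_excess_square_bounded: "AE x in \<mu>. \<bar>(excess x)\<^sup>2\<bar> \<le> (\<bar>a\<bar> + \<bar>b\<bar> + \<bar>q\<bar>)\<^sup>2"
  using AE_excess_bounded by eventually_elim (simp add: square_le_if_abs_le)

lemma integrable_mu_bounded:
  fixes g :: "real \<Rightarrow> real"
  assumes "g \<in> borel_measurable borel" "AE x in \<mu>. \<bar>g x\<bar> \<le> C"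
  shows "integrable \<mu> g"
  using assms by (intro mu.integrable_const_bound[where B=C]) auto

lemma lbint_quantile_eq: "(LBINT p=\<beta>..1. quantile F p) = (\<integral>x. x * indicator {q<..} x \<partial>\<mu>)"
proof -
  interpret cdf_distribution \<mu>
    by (simp add: cdf_distribution_def)
  let ?h = "\<lambda>x. x * indicator {q<..} x"
  have I: "indicator {0<..<1} p * ?h (I p) = indicator {\<beta><..<1} p * quantile F p" for p
  proof (cases "p \<in> {0<..<1}")
    case True
    then have "q < I p \<longleftrightarrow> \<beta> < p"
      using pseudoinverse[of p q] F_q by auto
    then show ?thesis
      using True by (auto simp: indicator_def quantile_def)
  qed (use beta in \<open>auto simp: indicator_def\<close>)
  have "(\<integral>x. ?h x \<partial>\<mu>) = (\<integral>p. ?h (I p) \<partial>restrict_space lborel {0<..<1::real})"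
    using distr_I_eq_M integral_distr[of I "restrict_space lborel {0<..<1::real}" borel ?h] by simp
  also have "\<dots> = (\<integral>p. indicator {\<beta><..<1} p * quantile F p \<partial>lborel)"
    by (simp add: integral_restrict_space I)
  also have "\<dots> = (LBINT p=\<beta>..1. quantile F p)"
    using beta by (simp add: interval_integral_Ioo set_lebesgue_integral_def)
  finally show ?thesis ..
qed

text \<open>The population version of the Rockafellar--Uryasev formula, with the minimum attained at \<open>q\<close>.\<close>
lemma CVaR_eq: "CVaR \<beta> F = q + mean_excess / (1 - \<beta>)"
proof -
  have "AE x in \<mu>. \<bar>x * indicator {q<..} x\<bar> \<le> \<bar>a\<bar> + \<bar>b\<bar>"
    using AE_mu_bounded by eventually_elim (auto simp: indicator_def)
  then have int: "integrable \<mu> (\<lambda>x. x * indicator {q<..} x)"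
    by (intro integrable_mu_bounded) auto
  have "mean_excess = (\<integral>x. x * indicator {q<..} x - q * indicator {q<..} x \<partial>\<mu>)"
    unfolding mean_excess_def excess_def by (intro Bochner_Integration.integral_cong) (auto simp: indicator_def)
  also have "\<dots> = (LBINT p=\<beta>..1. quantile F p) - q * (1 - \<beta>)"
  proof -
    have "integrable \<mu> (\<lambda>x. q * indicator {q<..} x)"
      by (intro integrable_mu_bounded[where C="\<bar>q\<bar>"]) (auto intro!: AE_I2 simp: indicator_def)
    then show ?thesis
      using int measure_greaterThan_q by (simp add: lbint_quantile_eq)
  qed
  finally show ?thesis
    using beta by (simp add: CVaR_def field_simps)
qed

lemma integrable_excess: "integrable \<mu> excess" "integrable \<mu> (\<lambda>x. (excess x)\<^sup>2)"
  by (rule integrable_mu_bounded[OF _ AE_excess_bounded] integrable_mu_bounded[OF _ AE_excess_square_bounded];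
      simp)+

lemma var_excess_eq: "var_excess = (\<integral>x. (excess x)\<^sup>2 \<partial>\<mu>) - mean_excess\<^sup>2"
  using integrable_excess mu.prob_space
  by (simp add: var_excess_def power2_diff mean_excess_def) (simp add: power2_eq_square)

lemma var_excess_pos: "0 < var_excess"
proof -
  have int: "integrable \<mu> (\<lambda>x. (excess x - mean_excess)\<^sup>2)"
    unfolding power2_diff using integrable_excess by simp
  have "var_excess \<noteq> 0"
  proof
    assume "var_excess = 0"
    then have "AE x in \<mu>. excess x = mean_excess"
      using integral_nonneg_eq_0_iff_AE[OF int] by (simp add: var_excess_def)
    moreover define E where "E = (if mean_excess = 0 then {q<..} else {..q})"
    ultimately have "AE x in \<mu>. x \<notin> E"
      by (auto simp: excess_def elim!: eventually_mono)
    then have "emeasure \<mu> {x\<in>space \<mu>. x \<in> E} = 0"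
      by (intro emeasure_eq_0_AE) simp
    then have "measure \<mu> E = 0"
      by (simp add: measure_def)
    then show False
      using measure_greaterThan_q F_q beta by (auto simp: E_def cdf_def split: if_splits)
  qed
  moreover have "0 \<le> var_excess"
    by (simp add: var_excess_def)
  ultimately show ?thesis
    by simp
qed

lemma centered_comp_X:
  fixes g :: "real \<Rightarrow> real"
  assumes [measurable]: "g \<in> borel_measurable borel" and bound: "AE x in \<mu>. \<bar>g x\<bar> \<le> C"
  shows "indep_vars (\<lambda>_. borel) (\<lambda>i \<omega>. g (X i \<omega>) - (\<integral>x. g x \<partial>\<mu>)) UNIV"
    and "AE \<omega> in M. \<bar>g (X i \<omega>) - (\<integral>x. g x \<partial>\<mu>)\<bar> \<le> 2 * C"
    and "expectation (\<lambda>\<omega>. g (X i \<omega>) - (\<integral>x. g x \<partial>\<mu>)) = 0"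
proof -
  show "indep_vars (\<lambda>_. borel) (\<lambda>i \<omega>. g (X i \<omega>) - (\<integral>x. g x \<partial>\<mu>)) UNIV"
    using indep_vars_compose2[OF indep, of "\<lambda>i x. g x - (\<integral>x. g x \<partial>\<mu>)" "\<lambda>_. borel"] by simp
  have int: "integrable \<mu> g"
    using bound by (rule integrable_mu_bounded[rotated]) simp
  have "\<bar>\<integral>x. g x \<partial>\<mu>\<bar> \<le> (\<integral>x. \<bar>g x\<bar> \<partial>\<mu>)"
    using integral_norm_bound[of \<mu> g] by simp
  also have "\<dots> \<le> C"
    using int bound by (intro mu.integral_le_const) auto
  finally have mean: "\<bar>\<integral>x. g x \<partial>\<mu>\<bar> \<le> C" .
  have "AE x in \<mu>. \<bar>g x - (\<integral>x. g x \<partial>\<mu>)\<bar> \<le> 2 * C"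
    using bound by eventually_elim (use mean in auto)
  then show "AE \<omega> in M. \<bar>g (X i \<omega>) - (\<integral>x. g x \<partial>\<mu>)\<bar> \<le> 2 * C"
    by (subst AE_distr_X_iff) auto
  have "expectation (\<lambda>\<omega>. g (X i \<omega>) - (\<integral>x. g x \<partial>\<mu>)) = (\<integral>x. g x - (\<integral>x. g x \<partial>\<mu>) \<partial>\<mu>)"
    by (rule expectation_comp_X) simp
  also have "\<dots> = 0"
    using int mu.prob_space by simp
  finally show "expectation (\<lambda>\<omega>. g (X i \<omega>) - (\<integral>x. g x \<partial>\<mu>)) = 0" .
qed

lemma vanishing_in_prob_mean_comp_X:
  fixes g :: "real \<Rightarrow> real"
  assumes [measurable]: "g \<in> borel_measurable borel" and "AE x in \<mu>. \<bar>g x\<bar> \<le> C"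
  shows "vanishing_in_prob M (\<lambda>n \<omega>. (\<Sum>i<n. g (X i \<omega>) - (\<integral>x. g x \<partial>\<mu>)) / real n)"
  by (rule vanishing_in_prob_mean_indep[OF centered_comp_X(1)[OF assms] _ centered_comp_X(2,3)[OF assms]])
    measurable

lemma bounded_in_prob_sum_comp_X:
  fixes g :: "real \<Rightarrow> real"
  assumes [measurable]: "g \<in> borel_measurable borel" and "AE x in \<mu>. \<bar>g x\<bar> \<le> C"
  shows "bounded_in_prob M (\<lambda>n \<omega>. (\<Sum>i<n. g (X i \<omega>) - (\<integral>x. g x \<partial>\<mu>)) / sqrt (real n))"
  by (rule bounded_in_prob_sum_div_sqrt_indep[OF centered_comp_X(1)[OF assms] _
        centered_comp_X(2,3)[OF assms]])
    measurable

lemma integral_indicator_atMost: "(\<integral>x. indicator {..t} x \<partial>\<mu>) = F t"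
  by (simp add: cdf_def)

lemma bounded_in_prob_count_X:
  assumes [measurable]: "A \<in> sets borel"
  shows "bounded_in_prob M (\<lambda>n \<omega>. (\<Sum>i<n. indicator A (X i \<omega>) - measure \<mu> A) / sqrt (real n))"
proof -
  have "AE x in \<mu>. \<bar>indicator A x :: real\<bar> \<le> 1"
    by (auto intro!: AE_I2 simp: indicator_def)
  from bounded_in_prob_sum_comp_X[OF _ this] show ?thesis
    by simp
qed

definition theta :: "nat \<Rightarrow> 's \<Rightarrow> real" where
  "theta n \<omega> = order_stat (\<lambda>i. X i \<omega>) n (nat \<lceil>real n * \<beta>\<rceil>)"

lemma theta_measurable[measurable]: "theta n \<in> borel_measurable M"
proof (cases "n = 0")
  case False
  then have n: "1 \<le> n"
    by simp
  have "{\<omega>\<in>space M. theta n \<omega> \<le> t}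
      = {\<omega>\<in>space M. real (nat \<lceil>real n * \<beta>\<rceil>) \<le> (\<Sum>i<n. indicator {..t} (X i \<omega>))}" for t
    using order_stat_le_iff[OF nat_ceiling_mult_bounds(1,2)[OF beta n]]
    by (simp add: theta_def sum_indicator_eq_card_less)
  then show ?thesis
    by (subst borel_measurable_iff_le) simp
qed (simp add: theta_def[abs_def] order_stat_def)

definition ecdf_deviation :: "real \<Rightarrow> nat \<Rightarrow> 's \<Rightarrow> real" where
  "ecdf_deviation t n \<omega> = (\<Sum>i<n. indicator {..t} (X i \<omega>) - F t) / real n"

lemma ecdf_deviation_measurable[measurable]: "ecdf_deviation t n \<in> borel_measurable M"
  unfolding ecdf_deviation_def by measurable

lemma vanishing_in_prob_ecdf_deviation: "vanishing_in_prob M (ecdf_deviation t)"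
proof -
  have "vanishing_in_prob M (\<lambda>n \<omega>. (\<Sum>i<n. indicator {..t} (X i \<omega>) - (\<integral>x. indicator {..t} x \<partial>\<mu>))
      / real n)"
    by (rule vanishing_in_prob_mean_comp_X[where C=1]) (auto intro!: AE_I2 simp: indicator_def)
  then show ?thesis
    by (simp only: integral_indicator_atMost ecdf_deviation_def[abs_def])
qed

lemma ecdf_deviation_eq:
  "1 \<le> n \<Longrightarrow> ecdf_deviation t n \<omega> = real (card {i. i < n \<and> X i \<omega> \<le> t}) / real n - F t"
  by (simp add: ecdf_deviation_def sum_subtractf sum_indicator_eq_card_less diff_divide_distrib)

lemma ecdf_deviation_less_if_theta_greater:
  assumes "1 \<le> n" "t < theta n \<omega>"
  shows "ecdf_deviation t n \<omega> < \<beta> - F t + 1 / real n"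
  using card_atMost_less_if_order_stat_ceiling_greater[OF beta assms(1), of t "\<lambda>i. X i \<omega>"] assms
  by (simp add: ecdf_deviation_eq theta_def field_simps)

lemma ecdf_deviation_ge_if_theta_le:
  assumes "1 \<le> n" "theta n \<omega> \<le> t"
  shows "\<beta> - F t \<le> ecdf_deviation t n \<omega>"
  using card_atMost_ge_if_order_stat_ceiling_le[OF beta assms(1), of "\<lambda>i. X i \<omega>" t] assms
  by (simp add: ecdf_deviation_eq theta_def field_simps)

text \<open>Consistency of the sample quantile: if \<open>\<theta>\<^sub>n\<close> is far from \<open>q\<close>, then the empirical
  distribution function is far from \<open>F\<close> at \<open>q + e\<close> or at \<open>q - e\<close>, where \<open>F\<close> stays away from \<open>\<beta>\<close>.\<close>
lemma theta_vanishing: "vanishing_in_prob M (\<lambda>n \<omega>. theta n \<omega> - q)"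
  unfolding vanishing_in_prob_def
proof (intro allI impI)
  fix e d :: real
  assume "0 < e" "0 < d"
  define \<gamma>1 \<gamma>2 where "\<gamma>1 = F (q + e) - \<beta>" and "\<gamma>2 = \<beta> - F (q - e)"
  have "0 < \<gamma>1" "0 < \<gamma>2"
    using F_q_plus_greater[OF \<open>0 < e\<close>] F_q_minus_less[OF \<open>0 < e\<close>] by (simp_all add: \<gamma>1_def \<gamma>2_def)
  let ?E1 = "\<lambda>n. {\<omega>\<in>space M. \<gamma>1/2 < \<bar>ecdf_deviation (q + e) n \<omega>\<bar>}"
  let ?E2 = "\<lambda>n. {\<omega>\<in>space M. \<gamma>2/2 < \<bar>ecdf_deviation (q - e) n \<omega>\<bar>}"
  have "eventually (\<lambda>n. prob (?E1 n) \<le> d/2) sequentially" "eventually (\<lambda>n. prob (?E2 n) \<le> d/2) sequentially"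
    using vanishing_in_probD[OF vanishing_in_prob_ecdf_deviation, of "\<gamma>1/2" "d/2" "q + e"]
      vanishing_in_probD[OF vanishing_in_prob_ecdf_deviation, of "\<gamma>2/2" "d/2" "q - e"]
      \<open>0 < \<gamma>1\<close> \<open>0 < \<gamma>2\<close> \<open>0 < d\<close>
    by auto
  moreover have "eventually (\<lambda>n. 1 \<le> n \<and> 2 / \<gamma>1 \<le> real n) sequentially"
    using eventually_ge_at_top[of 1] eventually_ge_at_top[of "nat \<lceil>2 / \<gamma>1\<rceil>"]
    by eventually_elim (use real_nat_ceiling_ge in \<open>auto intro: order_trans\<close>)
  ultimately show "eventually (\<lambda>n. prob {\<omega>\<in>space M. e < \<bar>theta n \<omega> - q\<bar>} \<le> d) sequentially"
  proof eventually_elim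
    case (elim n)
    then have n: "1 \<le> n" and "1 / real n \<le> \<gamma>1 / 2"
      using \<open>0 < \<gamma>1\<close> by (auto simp: field_simps)
    have "\<omega> \<in> ?E1 n \<or> \<omega> \<in> ?E2 n" if "\<omega> \<in> space M" "e < \<bar>theta n \<omega> - q\<bar>" for \<omega>
    proof (cases "q + e < theta n \<omega>")
      case True
      then show ?thesis
        using ecdf_deviation_less_if_theta_greater[OF n True] \<open>1 / real n \<le> \<gamma>1 / 2\<close> that(1)
        by (auto simp: \<gamma>1_def)
    next
      case False
      then have "theta n \<omega> \<le> q - e"
        using that(2) by auto
      then have "\<gamma>2 \<le> ecdf_deviation (q - e) n \<omega>"
        using ecdf_deviation_ge_if_theta_le[OF n] by (simp add: \<gamma>2_def)
      then show ?thesis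
        using \<open>0 < \<gamma>2\<close> that(1) by auto
    qed
    then have "prob {\<omega>\<in>space M. e < \<bar>theta n \<omega> - q\<bar>} \<le> prob (?E1 n) + prob (?E2 n)"
      by (intro prob_le_prob_Un) auto
    then show ?case
      using elim by simp
  qed
qed

definition scaled_excess_sum :: "nat \<Rightarrow> 's \<Rightarrow> real" where
  "scaled_excess_sum n \<omega> = (\<Sum>i<n. excess (X i \<omega>) - mean_excess) / sqrt (real n)"

definition objective_gap :: "nat \<Rightarrow> 's \<Rightarrow> real" where
  "objective_gap n \<omega> = sqrt (real n) *
    (cvar_objective \<beta> (\<lambda>i. X i \<omega>) n q - cvar_objective \<beta> (\<lambda>i. X i \<omega>) n (theta n \<omega>))"

lemma scaled_excess_sum_measurable[measurable]: "scaled_excess_sum n \<in> borel_measurable M"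
  unfolding scaled_excess_sum_def by measurable

lemma objective_gap_measurable[measurable]: "objective_gap n \<in> borel_measurable M"
  unfolding objective_gap_def cvar_objective_def by measurable

lemma sqrt_n_error_eq:
  assumes "1 \<le> n"
  shows "sqrt (real n) * (R_hat (psi_cvar \<beta>) (\<lambda>i. X i \<omega>) n - CVaR \<beta> F)
    = scaled_excess_sum n \<omega> / (1 - \<beta>) - objective_gap n \<omega>"
proof -
  have "mean_excess / (1 - \<beta>) = real n * mean_excess / (real n * (1 - \<beta>))"
    using assms by simp
  then have "cvar_objective \<beta> (\<lambda>i. X i \<omega>) n q - CVaR \<beta> F
      = (\<Sum>i<n. excess (X i \<omega>) - mean_excess) / (real n * (1 - \<beta>))"
    by (simp add: CVaR_eq cvar_objective_def excess_def sum_subtractf diff_divide_distrib)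
  then have "sqrt (real n) * (cvar_objective \<beta> (\<lambda>i. X i \<omega>) n q - CVaR \<beta> F)
      = scaled_excess_sum n \<omega> / (1 - \<beta>)"
    using assms by (simp add: scaled_excess_sum_def sqrt_mult_divide_real_eq)
  then show ?thesis
    using R_hat_psi_cvar_eq[OF beta assms]
    by (simp add: objective_gap_def theta_def algebra_simps)
qed

lemma objective_gap_bounds:
  assumes "1 \<le> n"
  shows "0 \<le> objective_gap n \<omega>"
    and "objective_gap n \<omega> \<le> \<bar>theta n \<omega> - q\<bar> *
      (\<bar>\<Sum>i<n. indicator {q<..} (X i \<omega>) - (1 - \<beta>)\<bar> + \<bar>\<Sum>i<n. indicator {q..} (X i \<omega>) - (1 - \<beta>)\<bar>)
      / (sqrt (real n) * (1 - \<beta>))"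
proof -
  show "0 \<le> objective_gap n \<omega>"
    using cvar_objective_order_stat_le[OF beta assms] by (simp add: objective_gap_def theta_def)
  let ?c = "real n * (1 - \<beta>)"
  have "objective_gap n \<omega> \<le> sqrt (real n) * (\<bar>theta n \<omega> - q\<bar> *
      (\<bar>(\<Sum>i<n. indicator {q<..} (X i \<omega>)) - ?c\<bar> + \<bar>(\<Sum>i<n. indicator {q..} (X i \<omega>)) - ?c\<bar>))
      / ?c"
    using mult_left_mono[OF cvar_objective_diff_le[OF beta(2), of n "\<lambda>i. X i \<omega>" q "theta n \<omega>"],
        of "sqrt (real n)"] assms
    by (simp add: objective_gap_def)
  then show "objective_gap n \<omega> \<le> \<bar>theta n \<omega> - q\<bar> *
      (\<bar>\<Sum>i<n. indicator {q<..} (X i \<omega>) - (1 - \<beta>)\<bar> + \<bar>\<Sum>i<n. indicator {q..} (X i \<omega>) - (1 - \<beta>)\<bar>)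
      / (sqrt (real n) * (1 - \<beta>))"
    using assms by (simp add: sqrt_mult_divide_real_eq sum_subtractf)
qed

lemma objective_gap_vanishing: "vanishing_in_prob M objective_gap"
proof -
  let ?B = "\<lambda>A n \<omega>. (\<Sum>i<n. indicator A (X i \<omega>) - (1 - \<beta>)) / sqrt (real n)"
  have "bounded_in_prob M (?B A)" if "A \<in> {{q<..}, {q..}}" for A
    using bounded_in_prob_count_X[of A] that measure_greaterThan_q measure_atLeast_q by auto
  then have "bounded_in_prob M (\<lambda>n \<omega>. \<bar>?B {q<..} n \<omega>\<bar> + \<bar>?B {q..} n \<omega>\<bar>)"
    by (intro bounded_in_prob_add) (auto simp: bounded_in_prob_def)
  then have "vanishing_in_prob M (\<lambda>n \<omega>. (\<bar>?B {q<..} n \<omega>\<bar> + \<bar>?B {q..} n \<omega>\<bar>) *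
      (1 / (1 - \<beta>) * (theta n \<omega> - q)))"
    by (intro vanishing_in_prob_mult vanishing_in_prob_cmult theta_vanishing) auto
  then show ?thesis
  proof (rule vanishing_in_prob_dominated[rotated 2])
    show "eventually (\<lambda>n. AE \<omega> in M. \<bar>objective_gap n \<omega>\<bar> \<le> \<bar>(\<bar>?B {q<..} n \<omega>\<bar> + \<bar>?B {q..} n \<omega>\<bar>) *
        (1 / (1 - \<beta>) * (theta n \<omega> - q))\<bar>) sequentially"
      using eventually_ge_at_top[of 1]
    proof eventually_elim
      case (elim n)
      have "0 < sqrt (real n)" "0 < 1 - \<beta>"
        using elim beta by auto
      then have "\<bar>(\<bar>?B {q<..} n \<omega>\<bar> + \<bar>?B {q..} n \<omega>\<bar>) * (1 / (1 - \<beta>) * (theta n \<omega> - q))\<bar>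
        = \<bar>theta n \<omega> - q\<bar> *
          (\<bar>\<Sum>i<n. indicator {q<..} (X i \<omega>) - (1 - \<beta>)\<bar> + \<bar>\<Sum>i<n. indicator {q..} (X i \<omega>) - (1 - \<beta>)\<bar>)
          / (sqrt (real n) * (1 - \<beta>))" for \<omega>
        by (simp add: abs_mult abs_divide) (simp add: field_simps)
      then show ?case
        using objective_gap_bounds[OF elim] by (intro AE_I2) simp
    qed
  qed simp
qed

definition asymptotic_sd :: real where
  "asymptotic_sd = sqrt var_excess / (1 - \<beta>)"

lemma asymptotic_sd_pos: "0 < asymptotic_sd"
  using var_excess_pos beta by (simp add: asymptotic_sd_def)

lemma sample_var_excess_vanishing:
  "vanishing_in_prob M (\<lambda>n \<omega>. sample_var (\<lambda>i. excess (X i \<omega>)) n - var_excess)"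
proof -
  define C where "C = \<bar>a\<bar> + \<bar>b\<bar> + \<bar>q\<bar>"
  let ?s1 = "\<lambda>n \<omega>. (\<Sum>i<n. excess (X i \<omega>) - mean_excess) / real n"
  let ?s2 = "\<lambda>n \<omega>. (\<Sum>i<n. (excess (X i \<omega>))\<^sup>2 - (var_excess + mean_excess\<^sup>2)) / real n"
  have s1: "vanishing_in_prob M (\<lambda>n \<omega>. \<bar>?s1 n \<omega>\<bar>)"
    using vanishing_in_prob_mean_comp_X[OF _ AE_excess_bounded]
    by (intro vanishing_in_prob_abs) (simp add: mean_excess_def)
  have s2: "vanishing_in_prob M (\<lambda>n \<omega>. \<bar>?s2 n \<omega>\<bar>)"
    using vanishing_in_prob_mean_comp_X[OF _ AE_excess_square_bounded]
    by (intro vanishing_in_prob_abs) (simp add: var_excess_eq)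
  have "vanishing_in_prob M (\<lambda>n \<omega>. 2 * (\<bar>?s2 n \<omega>\<bar> + \<bar>?s1 n \<omega>\<bar> * \<bar>?s1 n \<omega>\<bar>
      + 2 * \<bar>mean_excess\<bar> * \<bar>?s1 n \<omega>\<bar>) + 2 * \<bar>var_excess\<bar> / real n)"
    by (intro vanishing_in_prob_add vanishing_in_prob_cmult vanishing_in_prob_mult s1 s2
        vanishing_imp_bounded_in_prob vanishing_in_prob_deterministic lim_const_over_n
        | simp add: mult.assoc)+
  then show ?thesis
  proof (rule vanishing_in_prob_dominated[rotated 2])
    show "eventually (\<lambda>n. AE \<omega> in M. \<bar>sample_var (\<lambda>i. excess (X i \<omega>)) n - var_excess\<bar>
        \<le> \<bar>2 * (\<bar>?s2 n \<omega>\<bar> + \<bar>?s1 n \<omega>\<bar> * \<bar>?s1 n \<omega>\<bar> + 2 * \<bar>mean_excess\<bar> * \<bar>?s1 n \<omega>\<bar>)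
          + 2 * \<bar>var_excess\<bar> / real n\<bar>) sequentially"
      using eventually_ge_at_top[of 2]
      by eventually_elim (intro AE_I2 order_trans[OF sample_var_deviation_bound abs_ge_self])
  qed simp
qed

lemma sample_var_excess_eq_max: "sample_var (\<lambda>i. excess (x i)) n = sample_var (\<lambda>i. max (x i) q) n"
proof -
  have "(\<lambda>i. max (x i) q) = (\<lambda>i. q + excess (x i))"
    by (auto simp: excess_def max_def)
  then show ?thesis
    by (simp add: sample_var_shift)
qed

lemma sample_var_truncation_vanishing:
  "vanishing_in_prob M (\<lambda>n \<omega>. sample_var (\<lambda>i. max (X i \<omega>) (theta n \<omega>)) n
    - sample_var (\<lambda>i. max (X i \<omega>) q) n)"
proof -
  let ?\<delta> = "\<lambda>n \<omega>. \<bar>theta n \<omega> - q\<bar>"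
  have \<delta>: "vanishing_in_prob M ?\<delta>"
    by (rule vanishing_in_prob_abs[OF theta_vanishing])
  have "vanishing_in_prob M (\<lambda>n \<omega>. 8 * (max b q - max a q) * ?\<delta> n \<omega> + 8 * ?\<delta> n \<omega> * ?\<delta> n \<omega>)"
    by (intro vanishing_in_prob_add vanishing_in_prob_cmult vanishing_in_prob_mult \<delta>
        vanishing_imp_bounded_in_prob) auto
  then show ?thesis
  proof (rule vanishing_in_prob_dominated[rotated 2])
    show "eventually (\<lambda>n. AE \<omega> in M.
        \<bar>sample_var (\<lambda>i. max (X i \<omega>) (theta n \<omega>)) n - sample_var (\<lambda>i. max (X i \<omega>) q) n\<bar>
        \<le> \<bar>8 * (max b q - max a q) * ?\<delta> n \<omega> + 8 * ?\<delta> n \<omega> * ?\<delta> n \<omega>\<bar>) sequentially"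
      using eventually_ge_at_top[of "2::nat"]
    proof eventually_elim
      case (elim n)
      show ?case
        using AE_X_bounded
        by eventually_elim (rule order_trans[OF sample_var_max_perturbation[OF elim] abs_ge_self]; simp)
    qed
  qed simp
qed

lemma sigma2_hat_measurable[measurable]:
  "(\<lambda>\<omega>. sigma2_hat \<beta> (\<lambda>i. X i \<omega>) n) \<in> borel_measurable M"
  unfolding sigma2_hat_def theta_def[symmetric] by measurable

lemma sqrt_sigma2_hat_vanishing:
  "vanishing_in_prob M (\<lambda>n \<omega>. sqrt (sigma2_hat \<beta> (\<lambda>i. X i \<omega>) n) - asymptotic_sd)"
proof -
  have "vanishing_in_prob M (\<lambda>n \<omega>. 1 / (1 - \<beta>)\<^sup>2 *
      ((sample_var (\<lambda>i. max (X i \<omega>) (theta n \<omega>)) n - sample_var (\<lambda>i. max (X i \<omega>) q) n)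
      + (sample_var (\<lambda>i. excess (X i \<omega>)) n - var_excess)))"
    by (intro vanishing_in_prob_cmult vanishing_in_prob_add sample_var_truncation_vanishing
        sample_var_excess_vanishing) measurable
  then have "vanishing_in_prob M (\<lambda>n \<omega>. sigma2_hat \<beta> (\<lambda>i. X i \<omega>) n - asymptotic_sd\<^sup>2)"
    using beta var_excess_pos
    by (simp add: sigma2_hat_def asymptotic_sd_def theta_def sample_var_excess_eq_max power_divide
        diff_divide_distrib)
  moreover have "0 \<le> sigma2_hat \<beta> x n" for x n
    by (simp add: sigma2_hat_def sample_var_nonneg)
  ultimately show ?thesis
    using vanishing_in_prob_sqrt[of "\<lambda>n \<omega>. sigma2_hat \<beta> (\<lambda>i. X i \<omega>) n" "asymptotic_sd\<^sup>2"] asymptotic_sd_pos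
    by simp
qed

lemma inverse_sqrt_sigma2_hat_vanishing:
  "vanishing_in_prob M (\<lambda>n \<omega>. 1 / sqrt (sigma2_hat \<beta> (\<lambda>i. X i \<omega>) n) - 1 / asymptotic_sd)"
  using sqrt_sigma2_hat_vanishing asymptotic_sd_pos by (intro vanishing_in_prob_inverse) auto

lemma bounded_in_prob_inverse_sqrt_sigma2_hat:
  "bounded_in_prob M (\<lambda>n \<omega>. 1 / sqrt (sigma2_hat \<beta> (\<lambda>i. X i \<omega>) n))"
proof -
  have "bounded_in_prob M (\<lambda>n \<omega>. (1 / sqrt (sigma2_hat \<beta> (\<lambda>i. X i \<omega>) n) - 1 / asymptotic_sd) + 1 / asymptotic_sd)"
    by (rule bounded_in_prob_add[OF _ _ vanishing_imp_bounded_in_prob[OF inverse_sqrt_sigma2_hat_vanishing]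
          bounded_in_prob_const]) measurable
  then show ?thesis
    by simp
qed

lemma bounded_in_prob_scaled_excess_sum: "bounded_in_prob M scaled_excess_sum"
  using bounded_in_prob_sum_comp_X[OF _ AE_excess_bounded]
  by (simp add: scaled_excess_sum_def[abs_def] mean_excess_def)

lemma weak_conv_scaled_excess_sum:
  "weak_conv_m (\<lambda>n. distr M borel (\<lambda>\<omega>. scaled_excess_sum n \<omega> / sqrt var_excess))
    std_normal_distribution"
proof -
  let ?Y = "\<lambda>i \<omega>. excess (X i \<omega>)"
  have "indep_vars (\<lambda>i. borel) ?Y UNIV"
    using indep_vars_compose2[OF indep, of "\<lambda>i. excess" "\<lambda>_. borel"] by simp
  moreover have "expectation (?Y i) = mean_excess" for i
    by (simp add: expectation_comp_X mean_excess_def)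
  moreover have "integrable M (\<lambda>\<omega>. (?Y i \<omega>)\<^sup>2)" for i
    using AE_excess_square_bounded AE_distr_X_iff[of "\<lambda>x. \<bar>(excess x)\<^sup>2\<bar> \<le> (\<bar>a\<bar> + \<bar>b\<bar> + \<bar>q\<bar>)\<^sup>2" i]
    by (intro integrable_const_bound[where B="(\<bar>a\<bar> + \<bar>b\<bar> + \<bar>q\<bar>)\<^sup>2"]) auto
  moreover have "variance (?Y i) = (sqrt var_excess)\<^sup>2" for i
    using var_excess_pos expectation_comp_X[of "\<lambda>x. (excess x - mean_excess)\<^sup>2" i]
    by (simp add: \<open>\<And>i. expectation (?Y i) = mean_excess\<close> var_excess_def)
  moreover have "distr M borel (?Y i) = distr \<mu> borel excess" for i
    using distr_distr[of excess borel borel "X i" M] by (simp add: ident[of i] comp_def)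
  ultimately have "weak_conv_m (\<lambda>n. distr M borel (\<lambda>\<omega>. (\<Sum>i<n. ?Y i \<omega> - mean_excess)
      / sqrt (real n * (sqrt var_excess)\<^sup>2))) std_normal_distribution"
    using var_excess_pos by (intro central_limit_theorem) auto
  then show ?thesis
    using var_excess_pos by (simp add: scaled_excess_sum_def real_sqrt_mult)
qed

lemma weak_conv_studentized_error:
  "weak_conv_m (\<lambda>n. distr M borel (\<lambda>\<omega>.
      sqrt (real n) * (R_hat (psi_cvar \<beta>) (\<lambda>i. X i \<omega>) n - CVaR \<beta> F)
      / sqrt (sigma2_hat \<beta> (\<lambda>i. X i \<omega>) n))) std_normal_distribution"
proof -
  let ?S = "\<lambda>n \<omega>. sqrt (sigma2_hat \<beta> (\<lambda>i. X i \<omega>) n)"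
  let ?A = "\<lambda>n \<omega>. 1 / (1 - \<beta>) * scaled_excess_sum n \<omega>"
  let ?T = "\<lambda>n \<omega>. sqrt (real n) * (R_hat (psi_cvar \<beta>) (\<lambda>i. X i \<omega>) n - CVaR \<beta> F) / ?S n \<omega>"
  have T: "?T n \<omega> = (?A n \<omega> - objective_gap n \<omega>) / ?S n \<omega>" if "1 \<le> n" for n \<omega>
    using sqrt_n_error_eq[OF that] by simp
  have T_measurable: "?T n \<in> borel_measurable M" for n
  proof (cases "n = 0")
    case False
    then have "?T n = (\<lambda>\<omega>. (?A n \<omega> - objective_gap n \<omega>) / ?S n \<omega>)"
      using T by auto
    then show ?thesis
      by simp
  qed simp
  have "bounded_in_prob M ?A"
    by (intro bounded_in_prob_cmult bounded_in_prob_scaled_excess_sum) simp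
  then have "vanishing_in_prob M (\<lambda>n \<omega>. ?A n \<omega> * (1 / ?S n \<omega> - 1 / asymptotic_sd)
      + 1 / ?S n \<omega> * (-1 * objective_gap n \<omega>))"
    using inverse_sqrt_sigma2_hat_vanishing bounded_in_prob_inverse_sqrt_sigma2_hat
    by (intro vanishing_in_prob_add vanishing_in_prob_mult vanishing_in_prob_cmult
        objective_gap_vanishing) auto
  then have diff: "vanishing_in_prob M (\<lambda>n \<omega>. ?T n \<omega> - scaled_excess_sum n \<omega> / sqrt var_excess)"
  proof (rule vanishing_in_prob_dominated[rotated 2])
    show "eventually (\<lambda>n. AE \<omega> in M. \<bar>?T n \<omega> - scaled_excess_sum n \<omega> / sqrt var_excess\<bar>
        \<le> \<bar>?A n \<omega> * (1 / ?S n \<omega> - 1 / asymptotic_sd) + 1 / ?S n \<omega> * (-1 * objective_gap n \<omega>)\<bar>) sequentially"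
      using eventually_ge_at_top[of 1]
    proof eventually_elim
      case (elim n)
      have "scaled_excess_sum n \<omega> / sqrt var_excess = ?A n \<omega> / asymptotic_sd" for \<omega>
        using beta by (simp add: asymptotic_sd_def)
      then have "?T n \<omega> - scaled_excess_sum n \<omega> / sqrt var_excess
          = ?A n \<omega> * (1 / ?S n \<omega> - 1 / asymptotic_sd) + 1 / ?S n \<omega> * (-1 * objective_gap n \<omega>)" for \<omega>
        unfolding T[OF elim] by (simp add: diff_divide_distrib right_diff_distrib)
      then show ?case
        by (intro AE_I2) simp
    qed
  qed simp
  show ?thesis
    by (rule weak_conv_m_vanishing_diff[OF _ T_measurable isCont_cdf_std_normal
          weak_conv_scaled_excess_sum diff]) measurable
qed

end

theorem corollary1:
  fixes M :: "'s measure" and X :: "nat \<Rightarrow> 's \<Rightarrow> real"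
    and \<beta> a b :: real
  assumes "prob_space M"
    and beta: "0 < \<beta>" "\<beta> < 1"
    and meas: "\<And>i. X i \<in> borel_measurable M"
    and indep: "prob_space.indep_vars M (\<lambda>_. borel) X UNIV"
    and ident: "\<And>i. distr M borel (X i) = distr M borel (X 0)"
    and ab: "a < b" "AE \<omega> in M. X 0 \<omega> \<in> {a..b}"
    and cont: "continuous_on UNIV (cdf (distr M borel (X 0)))"
    and strict: "strict_mono_on {x. 0 < cdf (distr M borel (X 0)) x \<and> cdf (distr M borel (X 0)) x < 1}
                   (cdf (distr M borel (X 0)))"
  shows "weak_conv_m
    (\<lambda>n. distr M borel (\<lambda>\<omega>.
        sqrt (real n) * (R_hat (psi_cvar \<beta>) (\<lambda>i. X i \<omega>) n - CVaR \<beta> (cdf (distr M borel (X 0))))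
        / sqrt (sigma2_hat \<beta> (\<lambda>i. X i \<omega>) n)))
    std_normal_distribution"
proof -
  interpret cvar_clt_setting M X \<beta> a b
    by (rule cvar_clt_setting.intro[OF assms(1)], unfold_locales) (use assms in auto)
  show ?thesis
    by (rule weak_conv_studentized_error)
qed

end
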